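(* Let $a=1$, $b=-1$. For all $(J,E)\in D_1$, $$\Delta:=\frac{\partial\tilde P}{\partial E}\frac{\partial\tilde M}{\partial J}-\frac{\partial\tilde M}{\partial E}\frac{\partial\tilde P}{\partial J}<0.$$
   Context: With $a=1$, $b=-1$, let $V_J(r)=\frac{J^2}{2r^2}+\frac{r^2}{2}-\frac{r^4}{4}$. For $0<J<\sqrt{4/27}$ write $J=q(1-q^2)=Q(1-Q^2)$ with $0<q<1/\sqrt3<Q<1$, and set $E_-(J)=\frac14(1-Q^2)(3Q^2+1)$, $E_+(J)=\frac14(1-q^2)(3q^2+1)$. Let $D_1=\{(J,E):0<J<\sqrt{4/27},\ E_-(J)<E<E_+(J)\}$. For $(J,E)\in D_1$, let $r_1<r_2<r_3$ be the positive roots of $E-V_J(r)$ and define $T(J,E)=2\int_{r_1}^{r_2}\frac{dr}{\sqrt{2(E-V_J(r))}}$, $\tilde M(J,E)=\int_{r_1}^{r_2}\frac{r^2\,dr}{\sqrt{2(E-V_J(r))}}$ and $\tilde P(J,E)=\frac12 J\,T(J,E)$. These are the period, mass $\frac12\int_0^T|u|^2$ and momentum $\frac12\operatorname{Im}\int_0^Tu\bar u_x$ of the solution of $u_{xx}+u-|u|^2u=0$ with $\operatorname{Im}(u\bar u_x)=J$ and $\frac12|u_x|^2+\frac12|u|^2-\frac14|u|^4=E$. *)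

theory Defs
  imports "HOL-Analysis.Analysis"
begin

text \<open>Effective potential with a = 1, b = -1.\<close>
definition VJ :: "real \<Rightarrow> real \<Rightarrow> real" where
  "VJ J r = J^2 / (2 * r^2) + r^2 / 2 - r^4 / 4"

definition qsmall :: "real \<Rightarrow> real" where
  "qsmall J = (THE q. 0 < q \<and> q < 1 / sqrt 3 \<and> J = q * (1 - q^2))"

definition Qbig :: "real \<Rightarrow> real" where
  "Qbig J = (THE Q. 1 / sqrt 3 < Q \<and> Q < 1 \<and> J = Q * (1 - Q^2))"

definition Eminus :: "real \<Rightarrow> real" where
  "Eminus J = (let Q = Qbig J in (1 - Q^2) * (3 * Q^2 + 1) / 4)"

definition Eplus :: "real \<Rightarrow> real" where
  "Eplus J = (let q = qsmall J in (1 - q^2) * (3 * q^2 + 1) / 4)"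

definition D1 :: "(real \<times> real) set" where
  "D1 = {(J, E). 0 < J \<and> J < sqrt (4 / 27) \<and> Eminus J < E \<and> E < Eplus J}"

definition roots :: "real \<Rightarrow> real \<Rightarrow> real list" where
  "roots J E = sorted_list_of_set {r. 0 < r \<and> VJ J r = E}"

definition r1 :: "real \<Rightarrow> real \<Rightarrow> real" where "r1 J E = roots J E ! 0"
definition r2 :: "real \<Rightarrow> real \<Rightarrow> real" where "r2 J E = roots J E ! 1"

text \<open>Period, mass and momentum (improper integrals, as Henstock-Kurzweil integrals).\<close>
definition Tper :: "real \<Rightarrow> real \<Rightarrow> real" where
  "Tper J E = 2 * integral {r1 J E .. r2 J E} (\<lambda>r. 1 / sqrt (2 * (E - VJ J r)))"

definition Mt :: "real \<Rightarrow> real \<Rightarrow> real" where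
  "Mt J E = integral {r1 J E .. r2 J E} (\<lambda>r. r^2 / sqrt (2 * (E - VJ J r)))"

definition Pt :: "real \<Rightarrow> real \<Rightarrow> real" where
  "Pt J E = J * Tper J E / 2"

end

theory Submission
  imports Defs
begin

text \<open>
  Write \<open>a < b < c\<close> for the squares of the turning points, the roots of
  \<open>4 x (E - V\<^sub>J(sqrt x)) = x\<^sup>3 - 2 x\<^sup>2 + 4 E x - 2 J\<^sup>2\<close>. The substitution
  \<open>r\<^sup>2 = a + (b - a) sin\<^sup>2 \<phi>\<close> turns period and mass into complete elliptic integrals:
  \<open>T = 2 sqrt 2 K\<close> and \<open>M = sqrt 2 (c K - E)\<close>, where \<open>K\<close> and \<open>E\<close> are
  \<open>\<integral>\<^sub>0\<^bsup>\<pi>/2\<^esup> \<Delta>\<^sup>-\<^sup>1\<close> and \<open>\<integral>\<^sub>0\<^bsup>\<pi>/2\<^esup> \<Delta>\<close> with \<open>\<Delta>\<^sup>2 = (c - a) cos\<^sup>2 + (c - b) sin\<^sup>2\<close>.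
  Partial derivatives in \<open>E\<close> (resp. \<open>J\<close>) are computed along the curve of constant \<open>J\<close>
  (resp. \<open>E\<close>) parametrised by the middle root \<open>b\<close>: one differentiates \<open>K\<close> and \<open>E\<close>
  under the integral sign, eliminates the resulting integrals by Legendre-type identities and
  inverts the parametrisation. With \<open>X = (c - a) K - E\<close> and \<open>Y = E - (c - b) K\<close>
  the determinant then equals minus a polynomial with positive coefficients in
  \<open>a, b - a, c - b, X - Y, Y\<close> divided by a positive number, and it is negative because
  \<open>X \<ge> Y \<ge> 0\<close> and \<open>X + Y > 0\<close>.
\<close>

section \<open>Complete elliptic integrals\<close>

text \<open>With \<open>k\<^sup>2 = 1 - B / A\<close>, Legendre's complete integrals are
  \<open>K(k) = sqrt A * elliptic_K A B\<close> and \<open>E(k) = elliptic_E A B / sqrt A\<close>.\<close>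

definition elliptic_delta :: "real \<Rightarrow> real \<Rightarrow> real \<Rightarrow> real" where
  "elliptic_delta A B t = sqrt (A * (cos t)^2 + B * (sin t)^2)"

definition elliptic_K :: "real \<Rightarrow> real \<Rightarrow> real" where
  "elliptic_K A B = integral {0..pi/2} (\<lambda>t. 1 / elliptic_delta A B t)"

definition elliptic_E :: "real \<Rightarrow> real \<Rightarrow> real" where
  "elliptic_E A B = integral {0..pi/2} (elliptic_delta A B)"

lemma continuous_on_elliptic_delta [continuous_intros]:
  fixes f :: "'a::t2_space \<Rightarrow> real"
  assumes "continuous_on S f"
  shows "continuous_on S (\<lambda>x. elliptic_delta A B (f x))"
  unfolding elliptic_delta_def by (intro continuous_intros assms)

lemma cos_sin_form_pos:
  fixes A B t :: real
  assumes "0 < A" "0 < B"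
  shows "0 < A * (cos t)^2 + B * (sin t)^2"
proof -
  have "min A B = min A B * (cos t)^2 + min A B * (sin t)^2"
    by (simp flip: distrib_left)
  also have "\<dots> \<le> A * (cos t)^2 + B * (sin t)^2"
    by (intro add_mono mult_right_mono) auto
  finally show ?thesis using assms by linarith
qed

context
  fixes A B :: real
  assumes A: "0 < A" and B: "0 < B"
begin

lemma elliptic_delta_pos: "0 < elliptic_delta A B t"
  unfolding elliptic_delta_def using cos_sin_form_pos[OF A B] by simp

lemma elliptic_delta_sq: "(elliptic_delta A B t)^2 = A * (cos t)^2 + B * (sin t)^2"
  unfolding elliptic_delta_def using cos_sin_form_pos[OF A B, of t] by simp

lemma elliptic_delta_has_derivative:
  "(elliptic_delta A B has_real_derivative (B - A) * sin t * cos t / elliptic_delta A B t) (at t)"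
  unfolding elliptic_delta_def using cos_sin_form_pos[OF A B, of t]
  by (auto intro!: derivative_eq_intros simp: field_simps)

lemma has_integral_elliptic_K:
  "((\<lambda>t. 1 / elliptic_delta A B t) has_integral elliptic_K A B) {0..pi/2}"
  unfolding elliptic_K_def using elliptic_delta_pos
  by (intro integrable_integral integrable_continuous_interval continuous_intros) (auto simp: less_imp_neq[symmetric])

lemma has_integral_elliptic_E: "(elliptic_delta A B has_integral elliptic_E A B) {0..pi/2}"
  unfolding elliptic_E_def
  by (intro integrable_integral integrable_continuous_interval continuous_intros continuous_on_id)

lemma sin_cos_div_elliptic_delta_has_derivative:
  "((\<lambda>t. (A - B) * (sin t * cos t / elliptic_delta A B t)) has_real_derivative
    elliptic_delta A B t - A * B / (elliptic_delta A B t)^3) (at t)"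
proof -
  let ?d = "elliptic_delta A B t" and ?u = "(cos t)^2" and ?v = "(sin t)^2"
  have d: "?d \<noteq> 0" "?d^2 = A * ?u + B * ?v"
    using elliptic_delta_pos[of t] elliptic_delta_sq[of t] by auto
  have polynomial_identity:
    "(A - B) * (u - v) * (A * u + B * v) + (A - B)^2 * v * u = (A * u + B * v)^2 - A * B * (u + v)^2"
    for u v :: real
    by (simp add: power2_eq_square algebra_simps)
  have "((\<lambda>t. (A - B) * (sin t * cos t / elliptic_delta A B t)) has_real_derivative
      (A - B) * (((cos t * cos t + - sin t * sin t) * ?d - sin t * cos t * ((B - A) * sin t * cos t / ?d))
        / (?d * ?d))) (at t)"
    using d(1) by (intro DERIV_cmult DERIV_divide DERIV_mult DERIV_sin DERIV_cos elliptic_delta_has_derivative)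
  moreover have "(A - B) * (((cos t * cos t + - sin t * sin t) * ?d - sin t * cos t * ((B - A) * sin t * cos t / ?d))
        / (?d * ?d)) = ((A - B) * (?u - ?v) * ?d^2 + (A - B)^2 * ?v * ?u) / ?d^3"
    using d(1) by (simp add: field_simps power2_eq_square power3_eq_cube)
  moreover have "(A - B) * (?u - ?v) * ?d^2 + (A - B)^2 * ?v * ?u = (A * ?u + B * ?v)^2 - A * B * (?u + ?v)^2"
    unfolding d(2) by (rule polynomial_identity)
  moreover have "\<dots> = (?d^2)^2 - A * B"
    unfolding d(2) by simp
  moreover have "\<dots> = ?d * ?d^3 - A * B"
    by (simp add: power2_eq_square power3_eq_cube mult.assoc)
  ultimately show ?thesis
    using d(1) by (simp add: diff_divide_distrib)
qed

lemma has_integral_elliptic_inverse_cube: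
  "((\<lambda>t. 1 / (elliptic_delta A B t)^3) has_integral elliptic_E A B / (A * B)) {0..pi/2}"
proof -
  let ?d = "elliptic_delta A B"
  have "((\<lambda>t. (A - B) * (sin t * cos t / ?d t)) has_vector_derivative ?d t - A * B / (?d t)^3)
      (at t within {0..pi/2})" for t
    unfolding has_real_derivative_iff_has_vector_derivative[symmetric]
    by (rule has_field_derivative_at_within[OF sin_cos_div_elliptic_delta_has_derivative])
  then have "((\<lambda>t. ?d t - A * B / (?d t)^3) has_integral
      (A - B) * (sin (pi/2) * cos (pi/2) / ?d (pi/2)) - (A - B) * (sin 0 * cos 0 / ?d 0)) {0..pi/2}"
    by (intro fundamental_theorem_of_calculus) auto
  from has_integral_diff[OF has_integral_elliptic_E this]
  have "((\<lambda>t. (A * B) * (1 / (?d t)^3)) has_integral elliptic_E A B) {0..pi/2}"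
    by simp
  from has_integral_divide[OF this, of "A * B"] show ?thesis
    using A B by simp
qed

lemma cos_sin_combination_eq:
  "(A - B) * (p * (cos t)^2 + q * (sin t)^2) = (p - q) * (elliptic_delta A B t)^2 + (q * A - p * B)"
  unfolding elliptic_delta_sq by (simp add: sin_squared_eq algebra_simps)

lemma has_integral_cos_sin_div_elliptic_delta:
  assumes "A \<noteq> B"
  shows "((\<lambda>t. (p * (cos t)^2 + q * (sin t)^2) / elliptic_delta A B t) has_integral
    (p * (elliptic_E A B - B * elliptic_K A B) + q * (A * elliptic_K A B - elliptic_E A B)) / (A - B))
    {0..pi/2}"
proof -
  have "((\<lambda>t. ((p - q) * elliptic_delta A B t + (q * A - p * B) * (1 / elliptic_delta A B t)) / (A - B))
      has_integral ((p - q) * elliptic_E A B + (q * A - p * B) * elliptic_K A B) / (A - B)) {0..pi/2}"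
    by (intro has_integral_divide has_integral_add has_integral_mult_right
        has_integral_elliptic_E has_integral_elliptic_K)
  moreover have "(p * (cos t)^2 + q * (sin t)^2) / elliptic_delta A B t
      = ((p - q) * elliptic_delta A B t + (q * A - p * B) * (1 / elliptic_delta A B t)) / (A - B)" for t
  proof -
    have "elliptic_delta A B t \<noteq> 0" using elliptic_delta_pos[of t] by simp
    then have "(p * (cos t)^2 + q * (sin t)^2) / elliptic_delta A B t
        = ((p - q) * (elliptic_delta A B t)^2 + (q * A - p * B)) / ((A - B) * elliptic_delta A B t)"
      using assms by (simp flip: cos_sin_combination_eq)
    also have "\<dots> = ((p - q) * elliptic_delta A B t + (q * A - p * B) * (1 / elliptic_delta A B t)) / (A - B)"
      using \<open>elliptic_delta A B t \<noteq> 0\<close> by (simp add: field_simps power2_eq_square)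
    finally show ?thesis .
  qed
  ultimately show ?thesis
    by (simp add: algebra_simps)
qed

lemma has_integral_cos_sin_div_elliptic_delta_cube:
  assumes "A \<noteq> B"
  shows "((\<lambda>t. (p * (cos t)^2 + q * (sin t)^2) / (elliptic_delta A B t)^3) has_integral
    (p * (A * elliptic_K A B - elliptic_E A B) / A + q * (elliptic_E A B - B * elliptic_K A B) / B) / (A - B))
    {0..pi/2}"
proof -
  have "((\<lambda>t. ((p - q) * (1 / elliptic_delta A B t) + (q * A - p * B) * (1 / (elliptic_delta A B t)^3)) / (A - B))
      has_integral ((p - q) * elliptic_K A B + (q * A - p * B) * (elliptic_E A B / (A * B))) / (A - B)) {0..pi/2}"
    by (intro has_integral_divide has_integral_add has_integral_mult_right
        has_integral_elliptic_K has_integral_elliptic_inverse_cube)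
  moreover have "(p * (cos t)^2 + q * (sin t)^2) / (elliptic_delta A B t)^3
      = ((p - q) * (1 / elliptic_delta A B t) + (q * A - p * B) * (1 / (elliptic_delta A B t)^3)) / (A - B)" for t
  proof -
    have "elliptic_delta A B t \<noteq> 0" using elliptic_delta_pos[of t] by simp
    then have "(p * (cos t)^2 + q * (sin t)^2) / (elliptic_delta A B t)^3
        = ((p - q) * (elliptic_delta A B t)^2 + (q * A - p * B)) / ((A - B) * (elliptic_delta A B t)^3)"
      using assms by (simp flip: cos_sin_combination_eq)
    also have "\<dots> = ((p - q) * (1 / elliptic_delta A B t) + (q * A - p * B) * (1 / (elliptic_delta A B t)^3)) / (A - B)"
      using \<open>elliptic_delta A B t \<noteq> 0\<close> assms by (simp add: field_simps power2_eq_square power3_eq_cube)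
    finally show ?thesis .
  qed
  moreover have "(p - q) * elliptic_K A B + (q * A - p * B) * (elliptic_E A B / (A * B))
      = p * (A * elliptic_K A B - elliptic_E A B) / A + q * (elliptic_E A B - B * elliptic_K A B) / B"
    using A B by (simp add: field_simps)
  ultimately show ?thesis
    by simp
qed

lemma elliptic_K_pos: "0 < elliptic_K A B"
proof -
  have "1 / sqrt (A + B) \<le> 1 / elliptic_delta A B t" for t
  proof -
    have "A * (cos t)^2 + B * (sin t)^2 \<le> A * 1 + B * 1"
      using A B by (intro add_mono mult_left_mono) (auto simp: abs_square_le_1)
    then show ?thesis
      using elliptic_delta_pos[of t] unfolding elliptic_delta_def by (simp add: frac_le)
  qed
  then have "integral {0..pi/2} (\<lambda>t. 1 / sqrt (A + B)) \<le> elliptic_K A B"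
    unfolding elliptic_K_def
    by (intro integral_le integrable_const_ivl has_integral_integrable[OF has_integral_elliptic_K])
  moreover have "0 < integral {0..pi/2} (\<lambda>t. 1 / sqrt (A + B))"
    using A B by simp
  ultimately show ?thesis by linarith
qed

lemma elliptic_E_ge:
  assumes "B \<le> A"
  shows "B * elliptic_K A B \<le> elliptic_E A B"
proof -
  have "B * (1 / elliptic_delta A B t) \<le> elliptic_delta A B t" for t
  proof -
    have "B * (cos t)^2 + B * (sin t)^2 \<le> (elliptic_delta A B t)^2"
      unfolding elliptic_delta_sq using assms by (simp add: mult_right_mono)
    then show ?thesis
      using elliptic_delta_pos[of t] by (simp add: field_simps power2_eq_square flip: distrib_left)
  qed
  then show ?thesis
    using has_integral_le[OF has_integral_mult_right[OF has_integral_elliptic_K] has_integral_elliptic_E] by blast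
qed

end

lemma has_integral_reflect_quarter_period:
  fixes f :: "real \<Rightarrow> real"
  assumes "(f has_integral i) {0..pi/2}"
  shows "((\<lambda>t. f (pi/2 - t)) has_integral i) {0..pi/2}"
proof -
  have "((\<lambda>x. f ((-1) *\<^sub>R x + pi/2)) has_integral (1 / \<bar>-1\<bar> ^ DIM(real)) *\<^sub>R i)
      ((\<lambda>x. (1 / (-1)) *\<^sub>R x + - ((1 / (-1)) *\<^sub>R (pi/2))) ` cbox 0 (pi/2))"
    by (rule has_integral_affinity) (use assms in auto)
  moreover have "(\<lambda>x. (1 / (-1)) *\<^sub>R x + - ((1 / (-1)) *\<^sub>R (pi/2))) ` cbox 0 (pi/2) = {0..pi/2::real}"
    by (auto simp: image_iff intro!: bexI[where x = "pi/2 - _"])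
  ultimately show ?thesis by simp
qed

lemma elliptic_delta_reflect: "elliptic_delta A B (pi/2 - t) = elliptic_delta B A t"
  unfolding elliptic_delta_def by (simp add: cos_diff sin_diff add.commute)

lemma elliptic_K_commute:
  assumes "0 < A" "0 < B"
  shows "elliptic_K A B = elliptic_K B A"
  using has_integral_reflect_quarter_period[OF has_integral_elliptic_K[OF assms]]
  by (simp add: elliptic_delta_reflect elliptic_K_def integral_unique)

lemma elliptic_E_commute:
  assumes "0 < A" "0 < B"
  shows "elliptic_E A B = elliptic_E B A"
  using has_integral_reflect_quarter_period[OF has_integral_elliptic_E[OF assms]]
  by (simp add: elliptic_delta_reflect elliptic_E_def integral_unique)

text \<open>Averaging the integrand with its reflection \<open>t \<mapsto> pi/2 - t\<close> gives
  \<open>(\<Delta>\<^sub>1 + \<Delta>\<^sub>2) (\<Delta>\<^sub>1 - \<Delta>\<^sub>2)\<^sup>2 / (\<Delta>\<^sub>1 \<Delta>\<^sub>2) \<ge> 0\<close>, where \<open>\<Delta>\<^sub>1\<^sup>2 + \<Delta>\<^sub>2\<^sup>2 = A + B\<close>.\<close>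

lemma elliptic_E_le:
  assumes A: "0 < A" and B: "0 < B"
  shows "2 * elliptic_E A B \<le> (A + B) * elliptic_K A B"
proof -
  let ?f = "\<lambda>A B t. (A + B) * (1 / elliptic_delta A B t) - 2 * elliptic_delta A B t"
  have int: "(?f A B has_integral (A + B) * elliptic_K A B - 2 * elliptic_E A B) {0..pi/2}"
    if "0 < A" "0 < B" for A B
    by (intro has_integral_diff has_integral_mult_right has_integral_elliptic_K has_integral_elliptic_E that)
  have "0 \<le> ?f A B t + ?f B A t" for t
  proof -
    define d1 d2 where "d1 = elliptic_delta A B t" and "d2 = elliptic_delta B A t"
    have pos: "0 < d1" "0 < d2"
      unfolding d1_def d2_def using elliptic_delta_pos A B by auto
    have sum: "A + B = d1^2 + d2^2"
      unfolding d1_def d2_def elliptic_delta_sq[OF A B] elliptic_delta_sq[OF B A]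
      by (simp add: sin_squared_eq algebra_simps)
    have "?f A B t + ?f B A t = (A + B) * (1 / d1) - 2 * d1 + ((A + B) * (1 / d2) - 2 * d2)"
      unfolding d1_def d2_def by (simp add: add.commute)
    also have "\<dots> = (d1^2 + d2^2) * (1 / d1) - 2 * d1 + ((d1^2 + d2^2) * (1 / d2) - 2 * d2)"
      unfolding sum ..
    also have "\<dots> = (d1 + d2) * (d1 - d2)^2 / (d1 * d2)"
      using pos by (simp add: field_simps power2_eq_square)
    finally have "?f A B t + ?f B A t = (d1 + d2) * (d1 - d2)^2 / (d1 * d2)" .
    then show ?thesis
      using pos by simp
  qed
  then have "0 \<le> ((A + B) * elliptic_K A B - 2 * elliptic_E A B) + ((B + A) * elliptic_K B A - 2 * elliptic_E B A)"
    by (intro has_integral_nonneg[OF has_integral_add[OF int int]] A B)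
  moreover have "(B + A) * elliptic_K B A - 2 * elliptic_E B A = (A + B) * elliptic_K A B - 2 * elliptic_E A B"
    using elliptic_K_commute[OF A B] elliptic_E_commute[OF A B] by (simp add: add.commute)
  ultimately show ?thesis
    by linarith
qed

locale positive_quadrant_curve =
  fixes Af Bf Af' Bf' :: "real \<Rightarrow> real" and z0 \<rho> :: real
  assumes radius_pos: "0 < \<rho>"
    and has_derivative_Af: "\<And>z. z \<in> ball z0 \<rho> \<Longrightarrow> (Af has_real_derivative Af' z) (at z)"
    and has_derivative_Bf: "\<And>z. z \<in> ball z0 \<rho> \<Longrightarrow> (Bf has_real_derivative Bf' z) (at z)"
    and continuous_Af': "continuous_on (ball z0 \<rho>) Af'"
    and continuous_Bf': "continuous_on (ball z0 \<rho>) Bf'"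
    and Af_pos: "\<And>z. z \<in> ball z0 \<rho> \<Longrightarrow> 0 < Af z"
    and Bf_pos: "\<And>z. z \<in> ball z0 \<rho> \<Longrightarrow> 0 < Bf z"
begin

lemma has_real_derivative_integral_cos_sin_form:
  fixes g g' :: "real \<Rightarrow> real"
  assumes dg: "\<And>s. 0 < s \<Longrightarrow> (g has_real_derivative g' s) (at s)"
    and cg': "continuous_on {0<..} g'"
  shows "((\<lambda>z. integral {0..pi/2} (\<lambda>t. g (Af z * (cos t)^2 + Bf z * (sin t)^2))) has_real_derivative
      integral {0..pi/2} (\<lambda>t. g' (Af z0 * (cos t)^2 + Bf z0 * (sin t)^2) * (Af' z0 * (cos t)^2 + Bf' z0 * (sin t)^2)))
    (at z0)"
proof -
  let ?U = "ball z0 \<rho>"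
  let ?s = "\<lambda>z t. Af z * (cos t)^2 + Bf z * (sin t)^2"
  have s_pos: "0 < ?s z t" if "z \<in> ?U" for z t
    using cos_sin_form_pos Af_pos Bf_pos that by blast
  have cA: "continuous_on ?U Af" and cB: "continuous_on ?U Bf"
    using has_derivative_Af has_derivative_Bf
    by (auto intro!: continuous_at_imp_continuous_on DERIV_isCont)
  have cg: "continuous_on {0<..} g"
    using dg by (auto intro!: continuous_at_imp_continuous_on DERIV_isCont)
  have s_cont: "continuous_on (?U \<times> T) (\<lambda>x. ?s (fst x) (snd x))" for T
    by (intro continuous_intros continuous_on_compose2[OF cA continuous_on_fst[OF continuous_on_id]]
        continuous_on_compose2[OF cB continuous_on_fst[OF continuous_on_id]]) auto
  have "((\<lambda>z. integral (cbox 0 (pi/2)) (\<lambda>t. g (?s z t))) has_field_derivative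
      integral (cbox 0 (pi/2)) (\<lambda>t. g' (?s z0 t) * (Af' z0 * (cos t)^2 + Bf' z0 * (sin t)^2))) (at z0 within ?U)"
  proof (rule leibniz_rule_field_derivative)
    fix z t assume z: "z \<in> ?U"
    have "((\<lambda>z. ?s z t) has_real_derivative Af' z * (cos t)^2 + Bf' z * (sin t)^2) (at z)"
      using has_derivative_Af[OF z] has_derivative_Bf[OF z] by (auto intro!: derivative_eq_intros)
    from DERIV_chain2[OF dg[OF s_pos[OF z, of t]] this]
    show "((\<lambda>z. g (?s z t)) has_field_derivative g' (?s z t) * (Af' z * (cos t)^2 + Bf' z * (sin t)^2))
        (at z within ?U)"
      by (rule has_field_derivative_at_within)
  next
    fix z assume z: "z \<in> ?U"
    have "continuous_on (cbox 0 (pi/2)) (\<lambda>t. g (?s z t))"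
      by (rule continuous_on_compose2[OF cg]) (auto intro!: continuous_intros s_pos[OF z])
    then show "(\<lambda>t. g (?s z t)) integrable_on cbox 0 (pi/2)"
      by (rule integrable_continuous)
  next
    have "continuous_on (?U \<times> cbox 0 (pi/2)) (\<lambda>x. g' (?s (fst x) (snd x)))"
      by (rule continuous_on_compose2[OF cg' s_cont]) (auto intro: s_pos)
    moreover have "continuous_on (?U \<times> cbox 0 (pi/2)) (\<lambda>x. Af' (fst x) * (cos (snd x))^2 + Bf' (fst x) * (sin (snd x))^2)"
      by (intro continuous_intros continuous_on_compose2[OF continuous_Af' continuous_on_fst[OF continuous_on_id]]
          continuous_on_compose2[OF continuous_Bf' continuous_on_fst[OF continuous_on_id]]) auto
    ultimately show "continuous_on (?U \<times> cbox 0 (pi/2))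
        (\<lambda>(z, t). g' (?s z t) * (Af' z * (cos t)^2 + Bf' z * (sin t)^2))"
      by (simp add: case_prod_beta' continuous_on_mult)
  qed (use radius_pos in auto)
  then show ?thesis
    using at_within_open[of z0 ?U] radius_pos by simp
qed

lemma has_real_derivative_elliptic_K:
  assumes "Af z0 = A" "Bf z0 = B" "A \<noteq> B"
  shows "((\<lambda>z. elliptic_K (Af z) (Bf z)) has_real_derivative
    - (Af' z0 * (A * elliptic_K A B - elliptic_E A B) / A + Bf' z0 * (elliptic_E A B - B * elliptic_K A B) / B)
      / (2 * (A - B))) (at z0)"
proof -
  have AB: "0 < A" "0 < B"
    using Af_pos Bf_pos radius_pos assms by auto
  have dg: "((\<lambda>s. 1 / sqrt s) has_real_derivative - 1 / (2 * s * sqrt s)) (at s)" if "0 < s" for s :: real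
    using that by (auto intro!: derivative_eq_intros simp: field_simps)
  have cg': "continuous_on {0<..} (\<lambda>s::real. - 1 / (2 * s * sqrt s))"
    by (intro continuous_intros) auto
  have "((\<lambda>t. - ((Af' z0 * (cos t)^2 + Bf' z0 * (sin t)^2) / (elliptic_delta A B t)^3) / 2) has_integral
      - ((Af' z0 * (A * elliptic_K A B - elliptic_E A B) / A + Bf' z0 * (elliptic_E A B - B * elliptic_K A B) / B)
        / (A - B)) / 2) {0..pi/2}"
    by (intro has_integral_divide has_integral_neg has_integral_cos_sin_div_elliptic_delta_cube AB assms)
  then have "((\<lambda>t. - 1 / (2 * (Af z0 * (cos t)^2 + Bf z0 * (sin t)^2) * sqrt (Af z0 * (cos t)^2 + Bf z0 * (sin t)^2))
        * (Af' z0 * (cos t)^2 + Bf' z0 * (sin t)^2)) has_integral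
      - ((Af' z0 * (A * elliptic_K A B - elliptic_E A B) / A + Bf' z0 * (elliptic_E A B - B * elliptic_K A B) / B)
        / (A - B)) / 2) {0..pi/2}"
  proof (rule has_integral_eq[rotated])
    fix t
    have "0 < A * (cos t)^2 + B * (sin t)^2"
      using cos_sin_form_pos[OF AB] .
    then show "- ((Af' z0 * (cos t)^2 + Bf' z0 * (sin t)^2) / (elliptic_delta A B t)^3) / 2
        = - 1 / (2 * (Af z0 * (cos t)^2 + Bf z0 * (sin t)^2) * sqrt (Af z0 * (cos t)^2 + Bf z0 * (sin t)^2))
          * (Af' z0 * (cos t)^2 + Bf' z0 * (sin t)^2)"
      unfolding elliptic_delta_def assms by (simp add: power3_eq_cube field_simps)
  qed
  from has_real_derivative_integral_cos_sin_form[OF dg cg', unfolded integral_unique[OF this]]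
  have "((\<lambda>z. elliptic_K (Af z) (Bf z)) has_real_derivative
      - ((Af' z0 * (A * elliptic_K A B - elliptic_E A B) / A + Bf' z0 * (elliptic_E A B - B * elliptic_K A B) / B)
        / (A - B)) / 2) (at z0)"
    by (simp add: elliptic_K_def elliptic_delta_def)
  then show ?thesis
    by (simp only: divide_divide_eq_left' minus_divide_left)
qed

lemma has_real_derivative_elliptic_E:
  assumes "Af z0 = A" "Bf z0 = B" "A \<noteq> B"
  shows "((\<lambda>z. elliptic_E (Af z) (Bf z)) has_real_derivative
    (Af' z0 * (elliptic_E A B - B * elliptic_K A B) + Bf' z0 * (A * elliptic_K A B - elliptic_E A B))
      / (2 * (A - B))) (at z0)"
proof -
  have AB: "0 < A" "0 < B"
    using Af_pos Bf_pos radius_pos assms by auto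
  have dg: "(sqrt has_real_derivative 1 / (2 * sqrt s)) (at s)" if "0 < s" for s :: real
    using that by (auto intro!: derivative_eq_intros simp: field_simps)
  have cg': "continuous_on {0<..} (\<lambda>s::real. 1 / (2 * sqrt s))"
    by (intro continuous_intros) auto
  have "((\<lambda>t. ((Af' z0 * (cos t)^2 + Bf' z0 * (sin t)^2) / elliptic_delta A B t) / 2) has_integral
      ((Af' z0 * (elliptic_E A B - B * elliptic_K A B) + Bf' z0 * (A * elliptic_K A B - elliptic_E A B))
        / (A - B)) / 2) {0..pi/2}"
    by (intro has_integral_divide has_integral_cos_sin_div_elliptic_delta AB assms)
  then have "((\<lambda>t. 1 / (2 * sqrt (Af z0 * (cos t)^2 + Bf z0 * (sin t)^2)) * (Af' z0 * (cos t)^2 + Bf' z0 * (sin t)^2))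
      has_integral ((Af' z0 * (elliptic_E A B - B * elliptic_K A B) + Bf' z0 * (A * elliptic_K A B - elliptic_E A B))
        / (A - B)) / 2) {0..pi/2}"
    by (rule has_integral_eq[rotated]) (simp add: elliptic_delta_def assms)
  from has_real_derivative_integral_cos_sin_form[OF dg cg', unfolded integral_unique[OF this]]
  have "((\<lambda>z. elliptic_E (Af z) (Bf z)) has_real_derivative
      ((Af' z0 * (elliptic_E A B - B * elliptic_K A B) + Bf' z0 * (A * elliptic_K A B - elliptic_E A B))
        / (A - B)) / 2) (at z0)"
    by (simp add: elliptic_E_def elliptic_delta_def[abs_def])
  then show ?thesis
    by (simp only: divide_divide_eq_left')
qed

end

section \<open>Period and mass as elliptic integrals\<close>

locale cubic_roots =
  fixes J E a b c :: real
  assumes a_pos: "0 < a" and a_less_b: "a < b" and b_less_c: "b < c"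
    and sum_roots: "a + b + c = 2"
    and sum_products: "a * b + b * c + c * a = 4 * E"
    and prod_roots: "a * b * c = 2 * J^2"
begin

abbreviation K_ell :: real where "K_ell \<equiv> elliptic_K (c - a) (c - b)"
abbreviation E_ell :: real where "E_ell \<equiv> elliptic_E (c - a) (c - b)"

lemma b_pos: "0 < b" and c_pos: "0 < c"
  using a_pos a_less_b b_less_c by auto

lemma E_minus_VJ:
  assumes "r \<noteq> 0"
  shows "E - VJ J r = (r^2 - a) * (b - r^2) * (c - r^2) / (4 * r^2)"
proof -
  have "E - VJ J r = (r^2 * r^2 * r^2 - 2 * r^2 * r^2 + 4 * E * r^2 - 2 * J^2) / (4 * r^2)"
    unfolding VJ_def using assms by (simp add: field_simps power2_eq_square power4_eq_xxxx)
  also have "r^2 * r^2 * r^2 - 2 * r^2 * r^2 + 4 * E * r^2 - 2 * J^2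
      = r^2 * r^2 * r^2 - (a + b + c) * r^2 * r^2 + (a * b + b * c + c * a) * r^2 - a * b * c"
    by (simp only: sum_roots sum_products prod_roots)
  also have "\<dots> = (r^2 - a) * (b - r^2) * (c - r^2)"
    by (simp add: algebra_simps)
  finally show ?thesis .
qed

lemma positive_level_set: "{r. 0 < r \<and> VJ J r = E} = {sqrt a, sqrt b, sqrt c}"
proof (intro set_eqI iffI)
  fix r assume "r \<in> {r. 0 < r \<and> VJ J r = E}"
  then have "0 < r" "(r^2 - a) * (b - r^2) * (c - r^2) = 0"
    using E_minus_VJ[of r] by auto
  then show "r \<in> {sqrt a, sqrt b, sqrt c}"
    by (auto simp: real_sqrt_unique)
next
  fix r assume "r \<in> {sqrt a, sqrt b, sqrt c}"
  then have "0 < r" "r^2 = a \<or> r^2 = b \<or> r^2 = c"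
    using a_pos b_pos c_pos by auto
  then show "r \<in> {r. 0 < r \<and> VJ J r = E}"
    using E_minus_VJ[of r] by auto
qed

lemma r1_eq: "r1 J E = sqrt a" and r2_eq: "r2 J E = sqrt b"
proof -
  have "sqrt a < sqrt b" "sqrt b < sqrt c"
    using a_less_b b_less_c by auto
  then have "roots J E = [sqrt a, sqrt b, sqrt c]"
    unfolding roots_def positive_level_set by (simp add: sorted_list_of_set_insert_remove)
  then show "r1 J E = sqrt a" "r2 J E = sqrt b"
    unfolding r1_def r2_def by simp_all
qed

lemma turning_fraction_bounds:
  assumes "r \<in> {sqrt a..sqrt b}"
  shows "0 \<le> (r^2 - a) / (b - a)" and "(r^2 - a) / (b - a) \<le> 1"
proof -
  have r: "sqrt a \<le> r" "r \<le> sqrt b" "0 \<le> sqrt a"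
    using assms a_pos by auto
  have "(sqrt a)^2 \<le> r^2" "r^2 \<le> (sqrt b)^2"
    using r by (intro power_mono; linarith)+
  then show "0 \<le> (r^2 - a) / (b - a)" "(r^2 - a) / (b - a) \<le> 1"
    using a_pos b_pos a_less_b by (simp_all add: field_simps)
qed

lemma turning_fraction_strict_bounds:
  assumes "r \<in> {sqrt a<..<sqrt b}"
  shows "0 < (r^2 - a) / (b - a)" and "(r^2 - a) / (b - a) < 1"
proof -
  have r: "sqrt a < r" "r < sqrt b" "0 \<le> sqrt a"
    using assms a_pos by auto
  have "(sqrt a)^2 < r^2" "r^2 < (sqrt b)^2"
    using r by (intro power_strict_mono; linarith)+
  then show "0 < (r^2 - a) / (b - a)" "(r^2 - a) / (b - a) < 1"
    using a_pos b_pos a_less_b by (simp_all add: field_simps)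
qed

text \<open>The inverse of the substitution \<open>r\<^sup>2 = a + (b - a) (sin \<phi>)\<^sup>2\<close>, which maps
  \<open>[0, pi/2]\<close> onto \<open>[sqrt a, sqrt b]\<close>.\<close>

definition turning_angle :: "real \<Rightarrow> real" where
  "turning_angle r = arcsin (sqrt ((r^2 - a) / (b - a)))"

lemma turning_angle_range: "r \<in> {sqrt a..sqrt b} \<Longrightarrow> turning_angle r \<in> {0..pi/2}"
  unfolding turning_angle_def using turning_fraction_bounds[of r]
  by (auto intro!: arcsin_nonneg arcsin_le_mono[THEN iffD2, of _ 1, simplified])

lemma continuous_on_turning_angle: "continuous_on {sqrt a..sqrt b} turning_angle"
proof -
  have "continuous_on {sqrt a..sqrt b} (\<lambda>r. sqrt ((r^2 - a) / (b - a)))"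
    using a_less_b by (intro continuous_intros) auto
  moreover have "\<forall>r\<in>{sqrt a..sqrt b}. - 1 \<le> sqrt ((r^2 - a) / (b - a)) \<and> sqrt ((r^2 - a) / (b - a)) \<le> 1"
    using turning_fraction_bounds by (auto intro: order_trans[of _ 0])
  ultimately show ?thesis
    unfolding turning_angle_def[abs_def] by (rule continuous_on_arcsin)
qed

lemma sin_cos_turning_angle:
  assumes "r \<in> {sqrt a<..<sqrt b}"
  shows "sin (turning_angle r) = sqrt ((r^2 - a) / (b - a))"
    and "cos (turning_angle r) = sqrt (1 - (r^2 - a) / (b - a))"
    and "0 < sin (turning_angle r)" and "0 < cos (turning_angle r)"
proof -
  let ?t = "(r^2 - a) / (b - a)"
  have t: "0 < ?t" "?t < 1"
    using turning_fraction_strict_bounds[OF assms] by auto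
  then have s: "- 1 \<le> sqrt ?t" "sqrt ?t \<le> 1" "(sqrt ?t)^2 = ?t"
    by (auto intro: order_trans[OF _ real_sqrt_ge_zero])
  show "sin (turning_angle r) = sqrt ?t" "cos (turning_angle r) = sqrt (1 - ?t)"
    unfolding turning_angle_def using s by (simp_all add: sin_arcsin cos_arcsin)
  then show "0 < sin (turning_angle r)" "0 < cos (turning_angle r)"
    using t by simp_all
qed

lemma turning_angle_has_derivative:
  assumes "r \<in> {sqrt a<..<sqrt b}"
  shows "(turning_angle has_real_derivative
    r / ((b - a) * sin (turning_angle r) * cos (turning_angle r))) (at r)"
proof -
  let ?t = "(r^2 - a) / (b - a)"
  have t: "0 < ?t" "?t < 1"
    using turning_fraction_strict_bounds[OF assms] by auto
  have "((\<lambda>r. (r^2 - a) / (b - a)) has_real_derivative 2 * r / (b - a)) (at r)"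
    using a_less_b by (auto intro!: derivative_eq_intros)
  from DERIV_chain2[OF DERIV_arcsin DERIV_chain2[OF DERIV_real_sqrt this]]
  have "(turning_angle has_real_derivative
      inverse (sqrt (1 - (sqrt ?t)^2)) * (inverse (sqrt ?t) / 2 * (2 * r / (b - a)))) (at r)"
    unfolding turning_angle_def[abs_def] using t real_sqrt_ge_zero[of ?t] by fastforce
  then show ?thesis
    by (rule DERIV_cong) (use t a_less_b in \<open>simp add: sin_cos_turning_angle[OF assms] field_simps\<close>)
qed

lemma elliptic_delta_turning_angle:
  assumes "r \<in> {sqrt a<..<sqrt b}"
  shows "elliptic_delta (c - a) (c - b) (turning_angle r) = sqrt (c - r^2)"
proof -
  define t where "t = (r^2 - a) / (b - a)"
  have "0 < t" "t < 1"
    unfolding t_def using turning_fraction_strict_bounds[OF assms] by auto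
  then have sq: "(sin (turning_angle r))^2 = t" "(cos (turning_angle r))^2 = 1 - t"
    using sin_cos_turning_angle[OF assms] unfolding t_def[symmetric] by simp_all
  have r: "r^2 = a + (b - a) * t"
    unfolding t_def using a_less_b by simp
  have "(c - a) * (cos (turning_angle r))^2 + (c - b) * (sin (turning_angle r))^2 = c - r^2"
    unfolding sq r by (simp add: algebra_simps)
  then show ?thesis
    unfolding elliptic_delta_def by simp
qed

lemma sqrt_E_minus_VJ_turning_angle:
  assumes "r \<in> {sqrt a<..<sqrt b}"
  shows "sqrt (2 * (E - VJ J r)) = (b - a) * sin (turning_angle r) * cos (turning_angle r) * sqrt (c - r^2) / (sqrt 2 * r)"
proof -
  define t where "t = (r^2 - a) / (b - a)"
  have r_pos: "0 < r"
    using assms a_pos by (auto intro: less_trans[OF real_sqrt_gt_zero])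
  have t: "0 < t" "t < 1"
    unfolding t_def using turning_fraction_strict_bounds[OF assms] by auto
  have ra: "r^2 - a = (b - a) * t" and rb: "b - r^2 = (b - a) * (1 - t)"
    unfolding t_def using a_less_b by (simp_all add: field_simps)
  have rc: "0 < c - r^2"
    using t rb b_less_c a_less_b by (smt (verit) mult_pos_pos)
  have "2 * (E - VJ J r) = (b - a)^2 * t * (1 - t) * (c - r^2) / (2 * r^2)"
    unfolding E_minus_VJ[OF less_imp_neq[OF r_pos, symmetric]] ra rb by (simp add: power2_eq_square)
  also have "\<dots> = ((b - a) * sin (turning_angle r) * cos (turning_angle r) * sqrt (c - r^2) / (sqrt 2 * r))^2"
    unfolding sin_cos_turning_angle[OF assms] t_def[symmetric] using t rc
    by (simp add: power_mult_distrib power_divide)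
  finally show ?thesis
    using sin_cos_turning_angle(3,4)[OF assms] r_pos rc a_less_b by simp
qed

lemma has_integral_between_turning_points:
  "((\<lambda>r. (\<alpha> * r^2 + \<beta>) / sqrt (2 * (E - VJ J r))) has_integral
    sqrt 2 * ((\<alpha> * c + \<beta>) * K_ell - \<alpha> * E_ell)) {sqrt a..sqrt b}"
proof -
  let ?\<Delta> = "elliptic_delta (c - a) (c - b)" and ?\<psi> = turning_angle
  define \<psi>' where "\<psi>' r = r / ((b - a) * sin (?\<psi> r) * cos (?\<psi> r))" for r
  define f where "f \<phi> = sqrt 2 * ((\<alpha> * c + \<beta>) * (1 / ?\<Delta> \<phi>) - \<alpha> * ?\<Delta> \<phi>)" for \<phi>
  have AB: "0 < c - a" "0 < c - b"
    using a_less_b b_less_c by auto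
  have interior: "{sqrt a..sqrt b} - {sqrt a, sqrt b} = {sqrt a<..<sqrt b}"
    by auto
  have "((\<lambda>r. \<psi>' r *\<^sub>R f (?\<psi> r)) has_integral
      integral {?\<psi> (sqrt a)..?\<psi> (sqrt b)} f - integral {?\<psi> (sqrt b)..?\<psi> (sqrt a)} f) {sqrt a..sqrt b}"
  proof (rule has_integral_substitution_general[where s = "{sqrt a, sqrt b}" and c = 0 and d = "pi/2"])
    show "continuous_on {0..pi/2} f"
      unfolding f_def using elliptic_delta_pos[OF AB]
      by (intro continuous_intros continuous_on_id) (auto simp: less_imp_neq[symmetric])
  qed (use a_less_b turning_angle_range continuous_on_turning_angle turning_angle_has_derivative
    in \<open>auto simp: \<psi>'_def interior intro: has_field_derivative_at_within\<close>)
  moreover have "?\<psi> (sqrt a) = 0" "?\<psi> (sqrt b) = pi/2"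
    unfolding turning_angle_def using a_pos a_less_b by auto
  moreover have "(f has_integral sqrt 2 * ((\<alpha> * c + \<beta>) * K_ell - \<alpha> * E_ell)) {0..pi/2}"
    unfolding f_def
    by (intro has_integral_mult_right has_integral_diff has_integral_elliptic_K has_integral_elliptic_E AB)
  ultimately have "((\<lambda>r. \<psi>' r * f (?\<psi> r)) has_integral sqrt 2 * ((\<alpha> * c + \<beta>) * K_ell - \<alpha> * E_ell))
      {sqrt a..sqrt b}"
    by (simp add: integral_unique)
  then show ?thesis
  proof (rule has_integral_spike_finite[where S = "{sqrt a, sqrt b}", rotated 2])
    fix r assume "r \<in> {sqrt a..sqrt b} - {sqrt a, sqrt b}"
    then have r: "r \<in> {sqrt a<..<sqrt b}"
      unfolding interior .
    have "0 < r"
      using r a_pos by (auto intro: less_trans[OF real_sqrt_gt_zero])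
    moreover have "0 < c - r^2"
      using elliptic_delta_pos[OF AB, of "?\<psi> r"] unfolding elliptic_delta_turning_angle[OF r] by simp
    moreover have "f (?\<psi> r) = sqrt 2 * (\<alpha> * r^2 + \<beta>) / sqrt (c - r^2)"
      unfolding f_def elliptic_delta_turning_angle[OF r] using \<open>0 < c - r^2\<close>
      by (simp add: field_simps)
    ultimately show "(\<alpha> * r^2 + \<beta>) / sqrt (2 * (E - VJ J r)) = \<psi>' r * f (?\<psi> r)"
      unfolding sqrt_E_minus_VJ_turning_angle[OF r] \<psi>'_def
      using sin_cos_turning_angle(3,4)[OF r] a_less_b by (simp add: field_simps)
  qed simp
qed

lemma Tper_eq: "Tper J E = 2 * sqrt 2 * K_ell"
  using has_integral_between_turning_points[of 0 1]
  unfolding Tper_def r1_eq r2_eq by (simp add: integral_unique)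

lemma Mt_eq: "Mt J E = sqrt 2 * (c * K_ell - E_ell)"
  using has_integral_between_turning_points[of 1 0]
  unfolding Mt_def r1_eq r2_eq by (simp add: integral_unique)

end

section \<open>The turning points on \<open>D1\<close>\<close>

lemma x_minus_cube_difference: "y * (1 - y^2) - x * (1 - x^2) = (y - x) * (1 - (x^2 + x * y + y^2))"
  for x y :: real
  by (simp add: algebra_simps power2_eq_square)

lemma inverse_sqrt3_sq: "(1 / sqrt 3)^2 = (1 / 3 :: real)"
  by (simp add: power_divide)

lemma x_minus_cube_critical_value: "1 / sqrt 3 * (1 - (1 / sqrt 3)^2) = sqrt (4 / 27 :: real)"
proof -
  have "sqrt (4 / 27) = 1 / sqrt 3 * (2 / 3 :: real)"
    by (rule real_sqrt_unique) (simp_all add: power_mult_distrib power_divide)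
  then show ?thesis
    unfolding inverse_sqrt3_sq by simp
qed

lemma strict_mono_on_x_minus_cube: "strict_mono_on {0..1 / sqrt 3} (\<lambda>x::real. x * (1 - x^2))"
proof (rule strict_mono_onI)
  fix x y :: real assume x: "x \<in> {0..1 / sqrt 3}" and y: "y \<in> {0..1 / sqrt 3}" and "x < y"
  have "x^2 < y^2"
    using x \<open>x < y\<close> by (intro power_strict_mono) auto
  moreover have "x * y < y^2"
    using x \<open>x < y\<close> by (simp add: power2_eq_square mult_strict_right_mono)
  moreover have "y^2 \<le> (1 / sqrt 3)^2"
    using y by (intro power_mono) auto
  ultimately have "x^2 + x * y + y^2 < 1"
    unfolding inverse_sqrt3_sq by linarith
  then have "0 < (y - x) * (1 - (x^2 + x * y + y^2))"
    using \<open>x < y\<close> by simp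
  then show "x * (1 - x^2) < y * (1 - y^2)"
    using x_minus_cube_difference[of y x] by linarith
qed

lemma strict_antimono_on_x_minus_cube: "strict_antimono_on {1 / sqrt 3..1} (\<lambda>x::real. x * (1 - x^2))"
proof (rule monotone_onI)
  fix x y :: real assume x: "x \<in> {1 / sqrt 3..1}" and y: "y \<in> {1 / sqrt 3..1}" and "x < y"
  have "0 < x"
    using x by (auto intro: less_le_trans[of 0 "1 / sqrt 3"])
  have "(1 / sqrt 3)^2 \<le> x^2"
    using x by (intro power_mono) auto
  moreover have "x^2 < y^2"
    using \<open>0 < x\<close> \<open>x < y\<close> by (intro power_strict_mono) auto
  moreover have "x^2 < x * y"
    using \<open>0 < x\<close> \<open>x < y\<close> by (simp add: power2_eq_square)
  ultimately have "1 < x^2 + x * y + y^2"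
    unfolding inverse_sqrt3_sq by linarith
  then have "(y - x) * (1 - (x^2 + x * y + y^2)) < 0"
    using \<open>x < y\<close> by (simp add: mult_pos_neg)
  then show "y * (1 - y^2) < x * (1 - x^2)"
    using x_minus_cube_difference[of y x] by linarith
qed

lemma qsmall_bounds:
  assumes "0 < J" "J < sqrt (4 / 27)"
  shows "0 < qsmall J \<and> qsmall J < 1 / sqrt 3 \<and> J = qsmall J * (1 - (qsmall J)^2)"
proof -
  have "\<exists>x\<ge>0. x \<le> 1 / sqrt 3 \<and> x * (1 - x^2) = J"
    by (rule IVT') (use assms x_minus_cube_critical_value in \<open>auto intro!: continuous_intros\<close>)
  then obtain x where x: "0 \<le> x" "x \<le> 1 / sqrt 3" "x * (1 - x^2) = J"
    by blast
  then have x': "0 < x" "x < 1 / sqrt 3"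
    using assms x_minus_cube_critical_value by (auto simp: order.order_iff_strict)
  have "qsmall J = x"
    unfolding qsmall_def
  proof (rule the_equality)
    fix y assume "0 < y \<and> y < 1 / sqrt 3 \<and> J = y * (1 - y^2)"
    then show "y = x"
      using inj_onD[OF strict_mono_on_imp_inj_on[OF strict_mono_on_x_minus_cube], of y x] x by auto
  qed (use x x' in auto)
  then show ?thesis
    using x x' by simp
qed

lemma Qbig_bounds:
  assumes "0 < J" "J < sqrt (4 / 27)"
  shows "1 / sqrt 3 < Qbig J \<and> Qbig J < 1 \<and> J = Qbig J * (1 - (Qbig J)^2)"
proof -
  have "\<exists>x\<ge>1 / sqrt 3. x \<le> 1 \<and> x * (1 - x^2) = J"
    by (rule IVT2') (use assms x_minus_cube_critical_value in \<open>auto intro!: continuous_intros\<close>)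
  then obtain x where x: "1 / sqrt 3 \<le> x" "x \<le> 1" "x * (1 - x^2) = J"
    by blast
  then have x': "1 / sqrt 3 < x" "x < 1"
    using assms x_minus_cube_critical_value by (auto simp: order.order_iff_strict)
  have "Qbig J = x"
    unfolding Qbig_def
  proof (rule the_equality)
    fix y assume "1 / sqrt 3 < y \<and> y < 1 \<and> J = y * (1 - y^2)"
    then show "y = x"
      using inj_onD[OF strict_antimono_iff_antimono[THEN iffD1, OF strict_antimono_on_x_minus_cube, THEN conjunct2], of y x] x
      by auto
  qed (use x x' in auto)
  then show ?thesis
    using x x' by simp
qed

definition turning_cubic :: "real \<Rightarrow> real \<Rightarrow> real \<Rightarrow> real" where
  "turning_cubic J E x = x^3 - 2 * x^2 + 4 * E * x - 2 * J^2"

lemma turning_cubic_vieta: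
  assumes roots: "\<And>x. x \<in> {a, b, c} \<Longrightarrow> turning_cubic J E x = 0"
    and distinct: "a \<noteq> b" "a \<noteq> c" "b \<noteq> c"
  shows "a + b + c = 2" and "a * b + b * c + c * a = 4 * E" and "a * b * c = 2 * J^2"
proof -
  have pa: "a^3 - 2 * a^2 + 4 * E * a - 2 * J^2 = 0" and pb: "b^3 - 2 * b^2 + 4 * E * b - 2 * J^2 = 0"
    and pc: "c^3 - 2 * c^2 + 4 * E * c - 2 * J^2 = 0"
    using roots unfolding turning_cubic_def by auto
  have "(a - b) * (a^2 + a * b + b^2 - 2 * (a + b) + 4 * E) = 0"
    using pa pb by algebra
  then have ab: "a^2 + a * b + b^2 - 2 * (a + b) + 4 * E = 0"
    using distinct by simp
  have "(a - c) * (a^2 + a * c + c^2 - 2 * (a + c) + 4 * E) = 0"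
    using pa pc by algebra
  then have ac: "a^2 + a * c + c^2 - 2 * (a + c) + 4 * E = 0"
    using distinct by simp
  have "(b - c) * (a + b + c - 2) = 0"
    using ab ac by algebra
  then show sum: "a + b + c = 2"
    using distinct by simp
  have "a * b + b * c + c * a - 4 * E
      = (a + b) * (a + b + c - 2) - (a^2 + a * b + b^2 - 2 * (a + b) + 4 * E)"
    by (simp add: algebra_simps power2_eq_square)
  then show products: "a * b + b * c + c * a = 4 * E"
    using ab sum by simp
  show "a * b * c = 2 * J^2"
    using pa sum products by algebra
qed

text \<open>For \<open>J = Q (1 - Q\<^sup>2)\<close> and \<open>E = (1 - Q\<^sup>2) (3 Q\<^sup>2 + 1) / 4\<close> the point \<open>1 - Q\<^sup>2\<close> is a double
  root; this is where the bounds \<open>Eminus\<close> and \<open>Eplus\<close> of \<open>D1\<close> come from.\<close>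

lemma turning_cubic_at_critical_point:
  assumes "J = Q * (1 - Q^2)"
  shows "turning_cubic J E (1 - Q^2) = 4 * (1 - Q^2) * (E - (1 - Q^2) * (3 * Q^2 + 1) / 4)"
  unfolding turning_cubic_def assms by algebra

lemma D1_turning_cubic_sign_changes:
  assumes "(J, E) \<in> D1"
  obtains s S where "0 < s" "s < S" "S < 3"
    and "turning_cubic J E 0 < 0" "0 < turning_cubic J E s" "turning_cubic J E S < 0" "0 < turning_cubic J E 3"
proof -
  have J: "0 < J" "J < sqrt (4 / 27)" and E: "Eminus J < E" "E < Eplus J"
    using assms unfolding D1_def by auto
  define q Q where "q = qsmall J" and "Q = Qbig J"
  have q: "0 < q" "q < 1 / sqrt 3" "J = q * (1 - q^2)"
    using qsmall_bounds[OF J] unfolding q_def by auto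
  have Q: "1 / sqrt 3 < Q" "Q < 1" "J = Q * (1 - Q^2)"
    using Qbig_bounds[OF J] unfolding Q_def by auto
  have "0 < Q"
    using Q(1) by (smt (verit) divide_pos_pos real_sqrt_gt_zero)
  then have "Q^2 < 1^2"
    using Q(2) by (intro power_strict_mono) auto
  then have s_pos: "0 < 1 - Q^2"
    by simp
  have s_less_S: "1 - Q^2 < 1 - q^2"
    using q Q by (simp add: power_strict_mono)
  have "0 < 3 * Q^2 + 1"
    using zero_le_power2[of Q] by linarith
  then have "0 < Eminus J"
    unfolding Eminus_def Q_def[symmetric] Let_def using s_pos by simp
  moreover have "J^2 < (sqrt (4 / 27))^2"
    using J by (intro power_strict_mono) auto
  ultimately have "0 < turning_cubic J E 3"
    unfolding turning_cubic_def using E by simp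
  moreover have "0 < turning_cubic J E (1 - Q^2)" "turning_cubic J E (1 - q^2) < 0"
    unfolding turning_cubic_at_critical_point[OF Q(3)] turning_cubic_at_critical_point[OF q(3)]
    using E s_pos s_less_S unfolding Eminus_def Eplus_def Q_def[symmetric] q_def[symmetric] Let_def
    by (simp_all add: mult_pos_neg)
  moreover have "turning_cubic J E 0 < 0"
    unfolding turning_cubic_def using J by simp
  moreover have "1 - q^2 < 3"
    using zero_le_power2[of q] by linarith
  ultimately show ?thesis
    using s_pos s_less_S that by blast
qed

lemma D1_cubic_roots:
  assumes "(J, E) \<in> D1"
  obtains a b c where "cubic_roots J E a b c"
proof -
  obtain s S where "0 < s" "s < S" "S < 3" "turning_cubic J E 0 < 0" "0 < turning_cubic J E s"
      "turning_cubic J E S < 0" "0 < turning_cubic J E 3"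
    using D1_turning_cubic_sign_changes[OF assms] .
  moreover have "continuous_on {x..y} (turning_cubic J E)" for x y
    unfolding turning_cubic_def by (intro continuous_intros)
  ultimately obtain a b c where "0 < a" "a < s" "s < b" "b < S" "S < c" "c < 3"
      "turning_cubic J E a = 0" "turning_cubic J E b = 0" "turning_cubic J E c = 0"
    using IVT'[of "turning_cubic J E" 0 0 s] IVT2'[of "turning_cubic J E" S 0 s] IVT'[of "turning_cubic J E" S 0 3]
    by (smt (verit, best))
  then have "cubic_roots J E a b c"
    using turning_cubic_vieta[of a b c J E] by unfold_locales auto
  then show ?thesis
    by (rule that)
qed

section \<open>Derivatives along the curves of constant \<open>J\<close> and of constant \<open>E\<close>\<close>

lemma DERIV_from_reparametrization:
  fixes f F G :: "real \<Rightarrow> real"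
  assumes f_deriv: "(f has_real_derivative f') (at z)" and "f' \<noteq> 0"
    and local_inverse: "\<forall>\<^sub>F w in nhds z. isCont f w \<and> G (f w) = w"
    and F_deriv: "((\<lambda>w. F (f w)) has_real_derivative D) (at z)"
  shows "(F has_real_derivative D / f') (at (f z))"
proof -
  obtain S where S: "open S" "z \<in> S" "\<And>w. w \<in> S \<Longrightarrow> isCont f w \<and> G (f w) = w"
    using local_inverse unfolding eventually_nhds by blast
  have cont: "continuous_on S f"
    using S(3) by (simp add: continuous_at_imp_continuous_on)
  have "inj_on f S"
    by (rule inj_on_inverseI[of S G]) (use S(3) in blast)
  then have open_image: "open (f ` S)"
    using injective_into_1d_imp_open_map_UNIV[OF S(1) cont] by blast
  have "(G has_derivative (\<lambda>y. inverse f' * y)) (at (f z))"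
    using has_derivative_inverse_strong[OF S(1,2) cont, of G "\<lambda>y. f' * y"] f_deriv \<open>f' \<noteq> 0\<close> S(3)
    by (auto simp: has_field_derivative_def comp_def fun_eq_iff)
  then have "(G has_real_derivative inverse f') (at (f z))"
    by (simp add: has_field_derivative_def)
  from DERIV_chain2[of "\<lambda>w. F (f w)", OF _ this] F_deriv S
  have "((\<lambda>y. F (f (G y))) has_real_derivative D / f') (at (f z))"
    by (simp add: divide_inverse)
  then show ?thesis
  proof (rule has_field_derivative_transform_within_open[OF _ open_image])
    show "f z \<in> f ` S"
      using S(2) by blast
  qed (use S(3) in auto)
qed

text \<open>Once \<open>z\<close> is a root of \<open>x\<^sup>3 - 2 x\<^sup>2 + 4 e x - 2 j\<^sup>2\<close>, the other two roots are those of
  \<open>x\<^sup>2 - (2 - z) x + (z\<^sup>2 - 2 z + 4 e)\<close>, whose discriminant is \<open>root_disc e z\<close>.\<close>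

definition root_disc :: "real \<Rightarrow> real \<Rightarrow> real" where
  "root_disc e z = 4 + 4 * z - 3 * z^2 - 16 * e"

definition lower_root :: "real \<Rightarrow> real \<Rightarrow> real" where
  "lower_root e z = (2 - z - sqrt (root_disc e z)) / 2"

definition upper_root :: "real \<Rightarrow> real \<Rightarrow> real" where
  "upper_root e z = (2 - z + sqrt (root_disc e z)) / 2"

lemma cubic_roots_middle_root:
  assumes on_curve: "z^3 - 2 * z^2 + 4 * e * z = 2 * j^2"
    and order: "0 < lower_root e z" "lower_root e z < z" "z < upper_root e z"
  shows "cubic_roots j e (lower_root e z) z (upper_root e z)"
proof -
  have "0 < sqrt (root_disc e z)"
    using order unfolding lower_root_def upper_root_def by argo
  then have "(sqrt (root_disc e z))^2 = root_disc e z"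
    using real_sqrt_pow2 by force
  then have product: "lower_root e z * upper_root e z = z^2 - 2 * z + 4 * e"
    unfolding lower_root_def upper_root_def root_disc_def
    by (simp add: field_simps power2_eq_square)
  have sum: "lower_root e z + upper_root e z = 2 - z"
    unfolding lower_root_def upper_root_def by (simp add: field_simps)
  show ?thesis
  proof
    have "lower_root e z * z + z * upper_root e z + upper_root e z * lower_root e z
        = z * (lower_root e z + upper_root e z) + lower_root e z * upper_root e z"
      by (simp add: algebra_simps)
    then show "lower_root e z * z + z * upper_root e z + upper_root e z * lower_root e z = 4 * e"
      unfolding sum product by (simp add: algebra_simps power2_eq_square)
    have "lower_root e z * z * upper_root e z = z * (lower_root e z * upper_root e z)"
      by simp
    then show "lower_root e z * z * upper_root e z = 2 * j^2"
      unfolding product on_curve[symmetric] by (simp add: algebra_simps power2_eq_square power3_eq_cube)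
  qed (use order sum in auto)
qed

context cubic_roots
begin

lemma root_disc_middle_root: "root_disc E b = (c - a)^2"
proof -
  have "root_disc E b = 4 + 4 * b - 3 * b^2 - 4 * (4 * E)"
    unfolding root_disc_def by simp
  also have "\<dots> = 4 + 4 * b - 3 * b^2 - 4 * (a * b + b * c + c * a)"
    unfolding sum_products ..
  also have "\<dots> = (c - a)^2"
  proof -
    have b_eq: "b = 2 - a - c"
      using sum_roots by simp
    show ?thesis
      unfolding b_eq by (simp add: algebra_simps power2_eq_square)
  qed
  finally show ?thesis .
qed

lemma lower_root_middle_root: "lower_root E b = a"
  and upper_root_middle_root: "upper_root E b = c"
  unfolding lower_root_def upper_root_def root_disc_middle_root
  using a_less_b b_less_c sum_roots by auto

lemma eventually_cubic_roots_along_curve: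
  assumes "isCont e b" "e b = E"
    and on_curve: "\<forall>\<^sub>F z in nhds b. z^3 - 2 * z^2 + 4 * e z * z = 2 * (j z)^2"
  shows "\<forall>\<^sub>F z in nhds b. cubic_roots (j z) (e z) (lower_root (e z) z) z (upper_root (e z) z)"
proof -
  have "isCont (\<lambda>z. lower_root (e z) z) b" "isCont (\<lambda>z. upper_root (e z) z) b"
    unfolding lower_root_def upper_root_def root_disc_def by (auto intro!: continuous_intros assms(1))
  then have lower: "((\<lambda>z. lower_root (e z) z) \<longlongrightarrow> a) (at b)"
    and upper: "((\<lambda>z. upper_root (e z) z) \<longlongrightarrow> c) (at b)"
    using assms(2) lower_root_middle_root upper_root_middle_root by (simp_all add: isCont_def)
  have "\<forall>\<^sub>F z in at b. 0 < lower_root (e z) z"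
    by (rule order_tendstoD(1)[OF lower a_pos])
  moreover have "\<forall>\<^sub>F z in at b. 0 < z - lower_root (e z) z"
    by (rule order_tendstoD(1)[OF tendsto_diff[OF tendsto_ident_at lower]]) (use a_less_b in simp)
  moreover have "\<forall>\<^sub>F z in at b. 0 < upper_root (e z) z - z"
    by (rule order_tendstoD(1)[OF tendsto_diff[OF upper tendsto_ident_at]]) (use b_less_c in simp)
  ultimately have "\<forall>\<^sub>F z in at b. 0 < lower_root (e z) z \<and> lower_root (e z) z < z \<and> z < upper_root (e z) z"
    by eventually_elim auto
  then have "\<forall>\<^sub>F z in nhds b. 0 < lower_root (e z) z \<and> lower_root (e z) z < z \<and> z < upper_root (e z) z"
    unfolding eventually_nhds_conv_at
    using assms(2) lower_root_middle_root upper_root_middle_root a_pos a_less_b b_less_c by simp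
  with on_curve show ?thesis
    by eventually_elim (auto intro: cubic_roots_middle_root)
qed

lemma cubic_roots_on_ball_along_curve:
  assumes "open S" "b \<in> S" "isCont e b" "e b = E"
    and on_curve: "\<forall>\<^sub>F z in nhds b. z^3 - 2 * z^2 + 4 * e z * z = 2 * (j z)^2"
  obtains \<rho> where "0 < \<rho>" "ball b \<rho> \<subseteq> S"
    and "\<And>z. z \<in> ball b \<rho> \<Longrightarrow> cubic_roots (j z) (e z) (lower_root (e z) z) z (upper_root (e z) z)"
proof -
  have "\<forall>\<^sub>F z in nhds b. z \<in> S \<and> cubic_roots (j z) (e z) (lower_root (e z) z) z (upper_root (e z) z)"
    using eventually_nhds_in_open[OF assms(1,2)] eventually_cubic_roots_along_curve[OF assms(3-4) on_curve]
    by eventually_elim auto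
  then obtain \<rho> where "0 < \<rho>"
    and "\<And>z. dist z b < \<rho> \<Longrightarrow> z \<in> S \<and> cubic_roots (j z) (e z) (lower_root (e z) z) z (upper_root (e z) z)"
    unfolding eventually_nhds_metric by blast
  then show ?thesis
    by (intro that[of \<rho>]) (auto simp: dist_commute)
qed

text \<open>The derivatives of \<open>K_ell\<close> and \<open>E_ell\<close> along a curve of roots through \<open>b\<close> on which
  \<open>c - a\<close> has slope \<open>\<alpha>\<close>; then \<open>c - b\<close> has slope \<open>(\<alpha> - 3) / 2\<close>.\<close>

definition K_slope :: "real \<Rightarrow> real" where
  "K_slope \<alpha> = - (\<alpha> * ((c - a) * K_ell - E_ell) / (c - a) + (\<alpha> - 3) / 2 * (E_ell - (c - b) * K_ell) / (c - b))
    / (2 * (b - a))"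

definition E_slope :: "real \<Rightarrow> real" where
  "E_slope \<alpha> = (\<alpha> * (E_ell - (c - b) * K_ell) + (\<alpha> - 3) / 2 * ((c - a) * K_ell - E_ell)) / (2 * (b - a))"

definition Tper_slope :: "real \<Rightarrow> real" where
  "Tper_slope \<alpha> = 2 * sqrt 2 * K_slope \<alpha>"

definition Mt_slope :: "real \<Rightarrow> real" where
  "Mt_slope \<alpha> = sqrt 2 * ((\<alpha> - 1) / 2 * K_ell + c * K_slope \<alpha> - E_slope \<alpha>)"

lemma positive_quadrant_curve_along_root_curve:
  fixes j e e' :: "real \<Rightarrow> real"
  assumes "open S" "b \<in> S"
    and e_deriv: "\<And>z. z \<in> S \<Longrightarrow> (e has_real_derivative e' z) (at z)"
    and e'_cont: "continuous_on S e'"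
    and "e b = E"
    and on_curve: "\<forall>\<^sub>F z in nhds b. z^3 - 2 * z^2 + 4 * e z * z = 2 * (j z)^2"
  defines "A \<equiv> \<lambda>z. sqrt (root_disc (e z) z)"
    and "A' \<equiv> \<lambda>z. (4 - 6 * z - 16 * e' z) / (2 * sqrt (root_disc (e z) z))"
  obtains \<rho> where "positive_quadrant_curve A (\<lambda>z. upper_root (e z) z - z) A' (\<lambda>z. (A' z - 3) / 2) b \<rho>"
    and "\<And>z. z \<in> ball b \<rho> \<Longrightarrow> cubic_roots (j z) (e z) (lower_root (e z) z) z (upper_root (e z) z)"
proof -
  obtain \<rho> where \<rho>: "0 < \<rho>" "ball b \<rho> \<subseteq> S"
    and roots: "\<And>z. z \<in> ball b \<rho> \<Longrightarrow> cubic_roots (j z) (e z) (lower_root (e z) z) z (upper_root (e z) z)"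
    using cubic_roots_on_ball_along_curve[OF assms(1,2) DERIV_isCont[OF e_deriv[OF assms(2)]] assms(5) on_curve] by blast
  have A_pos: "0 < A z" if "z \<in> ball b \<rho>" for z
    using cubic_roots.a_less_b[OF roots[OF that]] cubic_roots.b_less_c[OF roots[OF that]]
    unfolding A_def lower_root_def upper_root_def by argo
  have A_deriv: "(A has_real_derivative A' z) (at z)" if "z \<in> ball b \<rho>" for z
  proof -
    have "0 < root_disc (e z) z"
      using A_pos[OF that] unfolding A_def by simp
    then show ?thesis
      unfolding A_def A'_def root_disc_def using e_deriv \<rho>(2) that
      by (auto intro!: derivative_eq_intros simp: field_simps)
  qed
  have "continuous_on (ball b \<rho>) e"
    using e_deriv \<rho>(2) by (auto intro!: continuous_at_imp_continuous_on DERIV_isCont)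
  then have A'_cont: "continuous_on (ball b \<rho>) A'"
    unfolding A'_def root_disc_def using A_pos continuous_on_subset[OF e'_cont \<rho>(2)]
    by (intro continuous_intros) (force simp: A_def root_disc_def)+
  have "positive_quadrant_curve A (\<lambda>z. upper_root (e z) z - z) A' (\<lambda>z. (A' z - 3) / 2) b \<rho>"
  proof
    show "continuous_on (ball b \<rho>) (\<lambda>z. (A' z - 3) / 2)"
      by (intro continuous_intros A'_cont) auto
    fix z assume z: "z \<in> ball b \<rho>"
    have "(\<lambda>z. upper_root (e z) z - z) = (\<lambda>z. (2 - z + A z) / 2 - z)"
      unfolding A_def upper_root_def by simp
    then show "((\<lambda>z. upper_root (e z) z - z) has_real_derivative (A' z - 3) / 2) (at z)"
      using A_deriv[OF z] by (auto intro!: derivative_eq_intros simp: field_simps)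
    show "0 < upper_root (e z) z - z"
      using cubic_roots.b_less_c[OF roots[OF z]] by simp
  qed (use \<rho>(1) A_pos A_deriv A'_cont in auto)
  then show ?thesis
    using roots by (rule that)
qed

lemma Tper_Mt_has_derivative_along_root_curve:
  fixes j e e' :: "real \<Rightarrow> real"
  assumes "open S" "b \<in> S"
    and e_deriv: "\<And>z. z \<in> S \<Longrightarrow> (e has_real_derivative e' z) (at z)"
    and e'_cont: "continuous_on S e'"
    and "e b = E"
    and on_curve: "\<forall>\<^sub>F z in nhds b. z^3 - 2 * z^2 + 4 * e z * z = 2 * (j z)^2"
  defines "\<alpha> \<equiv> (4 - 6 * b - 16 * e' b) / (2 * (c - a))"
  shows "\<forall>\<^sub>F z in nhds b. r2 (j z) (e z) = sqrt z"
    and "((\<lambda>z. Tper (j z) (e z)) has_real_derivative Tper_slope \<alpha>) (at b)"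
    and "((\<lambda>z. Mt (j z) (e z)) has_real_derivative Mt_slope \<alpha>) (at b)"
proof -
  define A where "A z = sqrt (root_disc (e z) z)" for z
  define A' where "A' z = (4 - 6 * z - 16 * e' z) / (2 * A z)" for z
  obtain \<rho> where "positive_quadrant_curve A (\<lambda>z. upper_root (e z) z - z) A' (\<lambda>z. (A' z - 3) / 2) b \<rho>"
    and roots: "\<And>z. z \<in> ball b \<rho> \<Longrightarrow> cubic_roots (j z) (e z) (lower_root (e z) z) z (upper_root (e z) z)"
    using positive_quadrant_curve_along_root_curve[OF assms(1-6)] unfolding A_def[abs_def] A'_def[abs_def] by blast
  then interpret curve: positive_quadrant_curve A "\<lambda>z. upper_root (e z) z - z" A' "\<lambda>z. (A' z - 3) / 2" b \<rho>
    by simp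
  have upper_eq: "upper_root (e z) z = (2 - z + A z) / 2" and lower_eq: "lower_root (e z) z = (2 - z - A z) / 2" for z
    unfolding A_def upper_root_def lower_root_def by simp_all
  have at_b: "A b = c - a" "upper_root (e b) b = c" "A' b = \<alpha>"
    unfolding A'_def A_def \<alpha>_def using \<open>e b = E\<close> root_disc_middle_root upper_root_middle_root a_less_b b_less_c
    by auto
  have K_deriv: "((\<lambda>z. elliptic_K (A z) (upper_root (e z) z - z)) has_real_derivative K_slope \<alpha>) (at b)"
    using curve.has_real_derivative_elliptic_K[of "c - a" "c - b"] at_b a_less_b
    unfolding K_slope_def by simp
  have E_deriv: "((\<lambda>z. elliptic_E (A z) (upper_root (e z) z - z)) has_real_derivative E_slope \<alpha>) (at b)"
    using curve.has_real_derivative_elliptic_E[of "c - a" "c - b"] at_b a_less_b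
    unfolding E_slope_def by simp
  have upper_deriv: "((\<lambda>z. upper_root (e z) z) has_real_derivative (\<alpha> - 1) / 2) (at b)"
    unfolding upper_eq using curve.has_derivative_Af[of b] curve.radius_pos at_b
    by (auto intro!: derivative_eq_intros simp: field_simps)
  have on_ball: "Tper (j z) (e z) = 2 * sqrt 2 * elliptic_K (A z) (upper_root (e z) z - z)
      \<and> Mt (j z) (e z) = sqrt 2 * (upper_root (e z) z * elliptic_K (A z) (upper_root (e z) z - z)
          - elliptic_E (A z) (upper_root (e z) z - z))
      \<and> r2 (j z) (e z) = sqrt z" if "z \<in> ball b \<rho>" for z
    using cubic_roots.Tper_eq[OF roots[OF that]] cubic_roots.Mt_eq[OF roots[OF that]]
      cubic_roots.r2_eq[OF roots[OF that]]
    by (simp add: upper_eq lower_eq field_simps)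
  show "\<forall>\<^sub>F z in nhds b. r2 (j z) (e z) = sqrt z"
    using eventually_nhds_in_open[of "ball b \<rho>" b] curve.radius_pos on_ball by (auto elim: eventually_mono)
  show "((\<lambda>z. Tper (j z) (e z)) has_real_derivative Tper_slope \<alpha>) (at b)"
    unfolding Tper_slope_def using DERIV_cmult[OF K_deriv, of "2 * sqrt 2"] curve.radius_pos on_ball
    by (rule_tac has_field_derivative_transform_within_open[where S = "ball b \<rho>"]) auto
  have "((\<lambda>z. sqrt 2 * (upper_root (e z) z * elliptic_K (A z) (upper_root (e z) z - z)
      - elliptic_E (A z) (upper_root (e z) z - z))) has_real_derivative Mt_slope \<alpha>) (at b)"
    unfolding Mt_slope_def
    using DERIV_cmult[OF DERIV_diff[OF DERIV_mult[OF upper_deriv K_deriv] E_deriv], of "sqrt 2"] at_b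
    by (simp add: algebra_simps)
  then show "((\<lambda>z. Mt (j z) (e z)) has_real_derivative Mt_slope \<alpha>) (at b)"
    using curve.radius_pos on_ball
    by (rule_tac has_field_derivative_transform_within_open[where S = "ball b \<rho>"]) auto
qed

lemma middle_root_cubic: "b^3 - 2 * b^2 + 4 * E * b = 2 * J^2"
proof -
  have "b^3 - 2 * b^2 + 4 * E * b = b^3 - (a + b + c) * b^2 + (a * b + b * c + c * a) * b"
    by (simp only: sum_roots sum_products)
  also have "\<dots> = 2 * J^2"
    unfolding prod_roots[symmetric] by (simp add: algebra_simps power2_eq_square power3_eq_cube)
  finally show ?thesis .
qed

lemma middle_root_cubic_derivative: "3 * b^2 - 4 * b + 4 * E = (b - a) * (b - c)"
proof -
  have "3 * b^2 - 4 * b + 4 * E = 3 * b^2 - 2 * (a + b + c) * b + (a * b + b * c + c * a)"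
    by (simp only: sum_roots sum_products)
  also have "\<dots> = (b - a) * (b - c)"
    by (simp add: algebra_simps power2_eq_square)
  finally show ?thesis .
qed

lemma middle_root_linear: "4 - 6 * b = 2 * (a + c - 2 * b)"
  using sum_roots by argo

lemma energy_curve_middle_root:
  shows "(2 * J^2 - b^3 + 2 * b^2) / (4 * b) = E"
    and "(- (b^3) + b^2 - J^2) / (2 * b^2) = (b - a) * (c - b) / (4 * b)"
    and "(4 - 6 * b - 16 * ((b - a) * (c - b) / (4 * b))) / (2 * (c - a))
      = (2 * a * c - a * b - b * c) / (b * (c - a))"
proof -
  have J2: "J^2 = (b^3 - 2 * b^2 + 4 * E * b) / 2"
    using middle_root_cubic by simp
  have ne: "b \<noteq> 0" "c - a \<noteq> 0"
    using b_pos a_less_b b_less_c by auto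
  show "(2 * J^2 - b^3 + 2 * b^2) / (4 * b) = E"
    unfolding J2 using ne by (simp add: field_simps)
  have numerator: "- (b^3) + b^2 - J^2 = - b * (3 * b^2 - 4 * b + 4 * E) / 2"
    unfolding J2 by (simp add: field_simps power2_eq_square power3_eq_cube)
  show "(- (b^3) + b^2 - J^2) / (2 * b^2) = (b - a) * (c - b) / (4 * b)"
    unfolding numerator middle_root_cubic_derivative using ne by (simp add: field_simps power2_eq_square)
  show "(4 - 6 * b - 16 * ((b - a) * (c - b) / (4 * b))) / (2 * (c - a))
      = (2 * a * c - a * b - b * c) / (b * (c - a))"
    unfolding middle_root_linear using ne by (simp add: field_simps)
qed

lemma Tper_Mt_has_derivative_E:
  defines "\<alpha> \<equiv> (2 * a * c - a * b - b * c) / (b * (c - a))" and "\<epsilon> \<equiv> (b - a) * (c - b) / (4 * b)"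
  shows "((\<lambda>e. Tper J e) has_real_derivative Tper_slope \<alpha> / \<epsilon>) (at E)"
    and "((\<lambda>e. Mt J e) has_real_derivative Mt_slope \<alpha> / \<epsilon>) (at E)"
proof -
  \<comment> \<open>at fixed \<open>J\<close>, \<open>z\<close> is a root of the cubic for the energy \<open>e z\<close>\<close>
  define e where "e z = (2 * J^2 - z^3 + 2 * z^2) / (4 * z)" for z
  define e' where "e' z = (- (z^3) + z^2 - J^2) / (2 * z^2)" for z
  have e_deriv: "(e has_real_derivative e' z) (at z)" if "z \<in> {0<..}" for z
    unfolding e_def[abs_def] e'_def using that
    by (auto intro!: derivative_eq_intros simp: field_simps power2_eq_square power3_eq_cube)
  have e'_cont: "continuous_on {0<..} e'"
    unfolding e'_def by (intro continuous_intros) auto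
  have b_in: "b \<in> {0<..}"
    using b_pos by simp
  have on_curve: "\<forall>\<^sub>F z in nhds b. z^3 - 2 * z^2 + 4 * e z * z = 2 * J^2"
    using eventually_nhds_in_open[OF open_greaterThan b_in]
    by (auto elim!: eventually_mono simp: e_def field_simps power2_eq_square power3_eq_cube)
  have e_b: "e b = E" and e'_b: "e' b = \<epsilon>"
    unfolding e_def e'_def \<epsilon>_def energy_curve_middle_root by simp_all
  note curve = Tper_Mt_has_derivative_along_root_curve[OF open_greaterThan b_in e_deriv e'_cont e_b on_curve,
      unfolded e'_b \<epsilon>_def energy_curve_middle_root, folded \<alpha>_def]
  have inverse: "\<forall>\<^sub>F z in nhds b. isCont e z \<and> (r2 J (e z))^2 = z"
    using eventually_conj[OF eventually_nhds_in_open[OF open_greaterThan b_in] curve(1)]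
    by (rule eventually_mono) (auto intro: DERIV_isCont e_deriv)
  have "\<epsilon> \<noteq> 0"
    unfolding \<epsilon>_def using a_less_b b_less_c b_pos by simp
  from DERIV_from_reparametrization[OF e_deriv[OF b_in, unfolded e'_b] this inverse] curve(2,3) e_b
  show "((\<lambda>e. Tper J e) has_real_derivative Tper_slope \<alpha> / \<epsilon>) (at E)"
    and "((\<lambda>e. Mt J e) has_real_derivative Mt_slope \<alpha> / \<epsilon>) (at E)"
    by auto
qed

lemma Tper_Mt_has_derivative_J:
  assumes "0 < J"
  defines "\<alpha> \<equiv> (a + c - 2 * b) / (c - a)" and "\<eta> \<equiv> (b - a) * (b - c) / (4 * J)"
  shows "((\<lambda>j. Tper j E) has_real_derivative Tper_slope \<alpha> / \<eta>) (at J)"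
    and "((\<lambda>j. Mt j E) has_real_derivative Mt_slope \<alpha> / \<eta>) (at J)"
proof -
  define g where "g z = (z^3 - 2 * z^2 + 4 * E * z) / 2" for z
  \<comment> \<open>at fixed \<open>E\<close>, \<open>z\<close> is a root of the cubic for \<open>J = j z\<close>\<close>
  define j where "j z = sqrt (g z)" for z
  have g_b: "g b = J^2" and j_b: "j b = J"
    unfolding j_def g_def middle_root_cubic using assms(1) by simp_all
  have g_cont: "isCont g z" for z
    unfolding g_def by (intro continuous_intros) simp
  have "\<forall>\<^sub>F z in nhds b. 0 < g z"
    using g_cont[of b] g_b assms(1) unfolding isCont_def eventually_nhds_conv_at
    by (auto intro: order_tendstoD(1))
  then have on_curve: "\<forall>\<^sub>F z in nhds b. z^3 - 2 * z^2 + 4 * E * z = 2 * (j z)^2"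
    by (rule eventually_mono) (simp add: j_def g_def)
  have "(j has_real_derivative (3 * b^2 - 4 * b + 4 * E) / 2 / (2 * sqrt (g b))) (at b)"
    unfolding j_def[abs_def] g_def using g_b assms(1)
    by (auto intro!: derivative_eq_intros simp: g_def field_simps power2_eq_square)
  then have j_deriv: "(j has_real_derivative \<eta>) (at b)"
    unfolding g_b middle_root_cubic_derivative \<eta>_def using assms(1) by simp
  have "c - a \<noteq> 0"
    using a_less_b b_less_c by simp
  then have \<alpha>_eq: "(4 - 6 * b - 16 * 0) / (2 * (c - a)) = \<alpha>"
    unfolding \<alpha>_def middle_root_linear by (simp add: field_simps)
  note curve = Tper_Mt_has_derivative_along_root_curve[of UNIV "\<lambda>_. E" "\<lambda>_. 0" j,
      OF open_UNIV UNIV_I DERIV_const continuous_on_const refl on_curve, unfolded \<alpha>_eq]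
  have j_cont: "isCont j z" for z
    unfolding j_def[abs_def] by (intro continuous_intros g_cont)
  have "b \<in> {0<..}"
    using b_pos by simp
  from eventually_conj[OF eventually_nhds_in_open[OF open_greaterThan this] curve(1)]
  have inverse: "\<forall>\<^sub>F z in nhds b. isCont j z \<and> (r2 (j z) E)^2 = z"
    by (rule eventually_mono) (simp add: j_cont)
  have "\<eta> \<noteq> 0"
    unfolding \<eta>_def using a_less_b b_less_c assms(1) by simp
  from DERIV_from_reparametrization[OF j_deriv this inverse] curve(2,3) j_b
  show "((\<lambda>j. Tper j E) has_real_derivative Tper_slope \<alpha> / \<eta>) (at J)"
    and "((\<lambda>j. Mt j E) has_real_derivative Mt_slope \<alpha> / \<eta>) (at J)"
    by auto
qed

end

section \<open>The sign of the determinant\<close>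

text \<open>With \<open>p = b - a\<close>, \<open>q = c - b\<close>, \<open>Z = X - Y\<close>, this polynomial times
  \<open>- 4 / (p\<^sup>3 q\<^sup>2 (c - a)\<^sup>2)\<close> is the determinant; all its coefficients are positive.\<close>

definition determinant_poly :: "real \<Rightarrow> real \<Rightarrow> real \<Rightarrow> real \<Rightarrow> real \<Rightarrow> real" where
  "determinant_poly a p q Z Y =
    4*p*q^3*Y^2 + 4*p*q^3*Z*Y + p*q^3*Z^2 + 12*p^2*q^2*Y^2 + 10*p^2*q^2*Z*Y + 2*p^2*q^2*Z^2
    + 12*p^3*q*Y^2 + 8*p^3*q*Z*Y + p^3*q*Z^2 + 4*p^4*Y^2 + 2*p^4*Z*Y + 12*a*p*q^2*Y^2
    + 12*a*p*q^2*Z*Y + 3*a*p*q^2*Z^2 + 21*a*p^2*q*Y^2 + 18*a*p^2*q*Z*Y + 3*a*p^2*q*Z^2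
    + 9*a*p^3*Y^2 + 6*a*p^3*Z*Y + 9*a^2*p*q*Y^2 + 12*a^2*p*q*Z*Y + 3*a^2*p*q*Z^2 + 6*a^2*p^2*Y^2
    + 6*a^2*p^2*Z*Y + 2*a^3*q*Z*Y + a^3*q*Z^2 + a^3*p*Y^2 + 2*a^3*p*Z*Y"

lemma determinant_poly_pos:
  assumes "0 < a" "0 < p" "0 < q" "0 \<le> Z" "0 \<le> Y" "0 < Z + Y"
  shows "0 < determinant_poly a p q Z Y"
proof -
  have "p * q^3 * Z^2 + 4 * p^4 * Y^2 \<le> determinant_poly a p q Z Y"
    unfolding determinant_poly_def using assms by (simp add: add_increasing add_increasing2)
  moreover have "0 < p * q^3 * Z^2 + 4 * p^4 * Y^2"
    using assms by (cases "0 < Y") (auto intro: add_nonneg_pos add_pos_nonneg)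
  ultimately show ?thesis
    by linarith
qed

lemma determinant_poly_identity:
  fixes a p q X Y :: real
  defines "kn \<equiv> \<lambda>n \<beta>. 2 * n * q * X + (n - 3 * \<beta> * (p + q)) * (p + q) * Y"
    and "mn \<equiv> \<lambda>n \<beta>. q * (p + q) * ((n + \<beta> * (p + q)) * X - 2 * \<beta> * (p + q) * Y)
      - (a + p + q) * (2 * n * q * X + (n - 3 * \<beta> * (p + q)) * (p + q) * Y)"
    and "nE \<equiv> 2 * a * (a + p + q) - a * (a + p) - (a + p) * (a + p + q)"
    and "nJ \<equiv> a + (a + p + q) - 2 * (a + p)"
  shows "a * (a + p) * (a + p + q) * (mn nE (a + p) * kn nJ 1 - kn nE (a + p) * mn nJ 1)
      + 2 * p * q^2 * (p + q)^2 * (X + Y) * mn nE (a + p)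
    = 4 * p * q^2 * (p + q)^2 * determinant_poly a p q (X - Y) Y"
  unfolding determinant_poly_def kn_def mn_def nE_def nJ_def by algebra

context cubic_roots
begin

abbreviation X_ell :: real where "X_ell \<equiv> (c - a) * K_ell - E_ell"
abbreviation Y_ell :: real where "Y_ell \<equiv> E_ell - (c - b) * K_ell"

text \<open>Both slopes are affine in \<open>\<alpha>\<close>; writing \<open>\<alpha> = n / (\<beta> (c - a))\<close> clears their
  denominators in the \<open>E\<close> direction (\<open>\<beta> = b\<close>) and the \<open>J\<close> direction (\<open>\<beta> = 1\<close>) alike.\<close>

lemma slopes_closed_form:
  fixes n \<beta> :: real
  assumes "\<beta> \<noteq> 0"
  defines "k \<equiv> 2 * n * (c - b) * X_ell + (n - 3 * \<beta> * (c - a)) * (c - a) * Y_ell"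
  shows "Tper_slope (n / (\<beta> * (c - a))) = - sqrt 2 * k / (2 * (b - a) * (c - b) * \<beta> * (c - a)^2)"
    and "Mt_slope (n / (\<beta> * (c - a))) = sqrt 2 * ((c - b) * (c - a) * ((n + \<beta> * (c - a)) * X_ell
      - 2 * \<beta> * (c - a) * Y_ell) - c * k) / (4 * (b - a) * (c - b) * \<beta> * (c - a)^2)"
proof -
  define p q A X Y where "p = b - a" and "q = c - b" and "A = c - a" and "X = X_ell" and "Y = Y_ell"
  have pqA: "0 < p" "0 < q" "0 < A"
    using a_less_b b_less_c unfolding p_def q_def A_def by auto
  have K_ell: "K_ell = (X + Y) / p"
    unfolding p_def X_def Y_def using a_less_b by (simp add: field_simps)
  have K_slope: "K_slope \<alpha> = - (\<alpha> * X / A + (\<alpha> - 3) / 2 * Y / q) / (2 * p)"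
    and E_slope: "E_slope \<alpha> = (\<alpha> * Y + (\<alpha> - 3) / 2 * X) / (2 * p)" for \<alpha>
    unfolding K_slope_def E_slope_def p_def q_def A_def X_def Y_def by simp_all
  have K_slope_n: "K_slope (n / (\<beta> * A)) = - (2 * n * q * X + (n - 3 * \<beta> * A) * A * Y) / (4 * p * q * \<beta> * A^2)"
    unfolding K_slope using assms(1) pqA by (simp add: field_simps power2_eq_square)
  have "Tper_slope (n / (\<beta> * A)) = - sqrt 2 * (2 * n * q * X + (n - 3 * \<beta> * A) * A * Y)
      / (2 * p * q * \<beta> * A^2)"
    and "Mt_slope (n / (\<beta> * A)) = sqrt 2 * (q * A * ((n + \<beta> * A) * X - 2 * \<beta> * A * Y)
      - c * (2 * n * q * X + (n - 3 * \<beta> * A) * A * Y)) / (4 * p * q * \<beta> * A^2)"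
    unfolding Tper_slope_def Mt_slope_def E_slope K_ell K_slope_n
    using assms(1) pqA by (simp_all add: field_simps power2_eq_square)
  then show "Tper_slope (n / (\<beta> * (c - a))) = - sqrt 2 * k / (2 * (b - a) * (c - b) * \<beta> * (c - a)^2)"
    and "Mt_slope (n / (\<beta> * (c - a))) = sqrt 2 * ((c - b) * (c - a) * ((n + \<beta> * (c - a)) * X_ell
      - 2 * \<beta> * (c - a) * Y_ell) - c * k) / (4 * (b - a) * (c - b) * \<beta> * (c - a)^2)"
    unfolding k_def p_def q_def A_def X_def Y_def by simp_all
qed

lemma Pt_Mt_determinant_eq:
  assumes "0 < J"
  defines "\<alpha>E \<equiv> (2 * a * c - a * b - b * c) / (b * (c - a))" and "\<epsilon> \<equiv> (b - a) * (c - b) / (4 * b)"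
    and "\<alpha>J \<equiv> (a + c - 2 * b) / (c - a)" and "\<eta> \<equiv> (b - a) * (b - c) / (4 * J)"
  shows "J * (Tper_slope \<alpha>E / \<epsilon>) / 2 * (Mt_slope \<alpha>J / \<eta>)
      - Mt_slope \<alpha>E / \<epsilon> * ((Tper J E + J * (Tper_slope \<alpha>J / \<eta>)) / 2)
    = - 4 * determinant_poly a (b - a) (c - b) (X_ell - Y_ell) Y_ell / ((b - a)^3 * (c - b)^2 * (c - a)^2)"
proof -
  define p q A where "p = b - a" and "q = c - b" and "A = c - a"
  have pqA: "0 < p" "0 < q" "0 < A" "A = p + q" "b = a + p" "c = a + p + q"
    using a_less_b b_less_c unfolding p_def q_def A_def by auto
  define X Y where "X = X_ell" and "Y = Y_ell"
  define k m where "k n \<beta> = 2 * n * q * X + (n - 3 * \<beta> * A) * A * Y"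
    and "m n \<beta> = q * A * ((n + \<beta> * A) * X - 2 * \<beta> * A * Y) - c * k n \<beta>" for n \<beta>
  define kE mE kJ mJ
    where "kE = k (2 * a * c - a * b - b * c) b" and "mE = m (2 * a * c - a * b - b * c) b"
      and "kJ = k (a + c - 2 * b) 1" and "mJ = m (a + c - 2 * b) 1"
  have slopes: "Tper_slope \<alpha>E = - sqrt 2 * kE / (2 * p * q * b * A^2)"
      "Mt_slope \<alpha>E = sqrt 2 * mE / (4 * p * q * b * A^2)"
      "Tper_slope \<alpha>J = - sqrt 2 * kJ / (2 * p * q * A^2)"
      "Mt_slope \<alpha>J = sqrt 2 * mJ / (4 * p * q * A^2)"
    using slopes_closed_form[of b "2 * a * c - a * b - b * c"] slopes_closed_form[of 1 "a + c - 2 * b"] b_pos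
    unfolding \<alpha>E_def \<alpha>J_def kE_def mE_def kJ_def mJ_def k_def m_def p_def q_def A_def X_def Y_def
    by (simp_all add: mult.commute)
  have T: "Tper J E = 2 * sqrt 2 * (X + Y) / p"
    unfolding Tper_eq p_def X_def Y_def using a_less_b by (simp add: field_simps)
  have \<epsilon>: "\<epsilon> = p * q / (4 * b)" and \<eta>: "\<eta> = - (p * q) / (4 * J)"
    unfolding \<epsilon>_def \<eta>_def p_def q_def by (simp_all add: algebra_simps)
  have identity: "a * b * c * (mE * kJ - kE * mJ) + 2 * p * q^2 * A^2 * (X + Y) * mE
      = 4 * p * q^2 * A^2 * determinant_poly a p q (X - Y) Y"
    using determinant_poly_identity[where a = a and p = p and q = q and X = X and Y = Y]
    unfolding kE_def mE_def kJ_def mJ_def k_def m_def pqA(4-6) by simp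
  have "J * (Tper_slope \<alpha>E / \<epsilon>) / 2 * (Mt_slope \<alpha>J / \<eta>)
      - Mt_slope \<alpha>E / \<epsilon> * ((Tper J E + J * (Tper_slope \<alpha>J / \<eta>)) / 2)
    = (2 * J^2 * (kE * mJ - mE * kJ) - 2 * p * q^2 * A^2 * (X + Y) * mE) / (p^4 * q^4 * A^4)"
    unfolding slopes T \<epsilon> \<eta> using pqA(1-3) b_pos assms(1)
    by (simp add: field_simps power2_eq_square power4_eq_xxxx)
  also have "\<dots> = - (a * b * c * (mE * kJ - kE * mJ) + 2 * p * q^2 * A^2 * (X + Y) * mE) / (p^4 * q^4 * A^4)"
    unfolding prod_roots by (simp add: algebra_simps)
  also have "\<dots> = - 4 * determinant_poly a p q (X - Y) Y / (p^3 * q^2 * A^2)"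
    unfolding identity using pqA(1-3) by (simp add: field_simps power2_eq_square power3_eq_cube power4_eq_xxxx)
  finally show ?thesis
    unfolding p_def q_def A_def X_def Y_def .
qed

lemma Pt_Mt_determinant_neg:
  assumes "0 < J"
  defines "\<alpha>E \<equiv> (2 * a * c - a * b - b * c) / (b * (c - a))" and "\<epsilon> \<equiv> (b - a) * (c - b) / (4 * b)"
    and "\<alpha>J \<equiv> (a + c - 2 * b) / (c - a)" and "\<eta> \<equiv> (b - a) * (b - c) / (4 * J)"
  shows "J * (Tper_slope \<alpha>E / \<epsilon>) / 2 * (Mt_slope \<alpha>J / \<eta>)
      - Mt_slope \<alpha>E / \<epsilon> * ((Tper J E + J * (Tper_slope \<alpha>J / \<eta>)) / 2) < 0"
proof -
  have AB: "0 < c - a" "0 < c - b"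
    using a_less_b b_less_c by auto
  have "0 \<le> Y_ell"
    using elliptic_E_ge[OF AB] a_less_b by simp
  moreover have "0 \<le> X_ell - Y_ell"
    using elliptic_E_le[OF AB] by (simp add: algebra_simps)
  moreover have "0 < X_ell + Y_ell"
    using elliptic_K_pos[OF AB] a_less_b by (simp add: algebra_simps)
  ultimately have "0 < determinant_poly a (b - a) (c - b) (X_ell - Y_ell) Y_ell"
    using a_pos a_less_b b_less_c by (intro determinant_poly_pos) auto
  then show ?thesis
    unfolding \<alpha>E_def \<epsilon>_def \<alpha>J_def \<eta>_def Pt_Mt_determinant_eq[OF assms(1)]
    using a_less_b b_less_c by (simp add: divide_neg_pos)
qed

end

theorem proposition5:
  fixes J E :: real
  assumes "(J, E) \<in> D1"
  shows "\<exists>PE PJ ME MJ.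
           ((\<lambda>e. Pt J e) has_real_derivative PE) (at E) \<and>
           ((\<lambda>j. Pt j E) has_real_derivative PJ) (at J) \<and>
           ((\<lambda>e. Mt J e) has_real_derivative ME) (at E) \<and>
           ((\<lambda>j. Mt j E) has_real_derivative MJ) (at J) \<and>
           PE * MJ - ME * PJ < 0"
proof -
  obtain a b c where "cubic_roots J E a b c"
    using D1_cubic_roots[OF assms] .
  then interpret cubic_roots J E a b c .
  have "0 < J"
    using assms by (simp add: D1_def)
  define \<alpha>E \<epsilon> \<alpha>J \<eta>
    where "\<alpha>E = (2 * a * c - a * b - b * c) / (b * (c - a))" and "\<epsilon> = (b - a) * (c - b) / (4 * b)"
      and "\<alpha>J = (a + c - 2 * b) / (c - a)" and "\<eta> = (b - a) * (b - c) / (4 * J)"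
  have TE: "((\<lambda>e. Tper J e) has_real_derivative Tper_slope \<alpha>E / \<epsilon>) (at E)"
    and ME: "((\<lambda>e. Mt J e) has_real_derivative Mt_slope \<alpha>E / \<epsilon>) (at E)"
    unfolding \<alpha>E_def \<epsilon>_def by (rule Tper_Mt_has_derivative_E)+
  have TJ: "((\<lambda>j. Tper j E) has_real_derivative Tper_slope \<alpha>J / \<eta>) (at J)"
    and MJ: "((\<lambda>j. Mt j E) has_real_derivative Mt_slope \<alpha>J / \<eta>) (at J)"
    unfolding \<alpha>J_def \<eta>_def using Tper_Mt_has_derivative_J[OF \<open>0 < J\<close>] by blast+
  have PE: "((\<lambda>e. Pt J e) has_real_derivative J * (Tper_slope \<alpha>E / \<epsilon>) / 2) (at E)"
    unfolding Pt_def by (intro DERIV_cdivide DERIV_cmult TE)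
  have PJ: "((\<lambda>j. Pt j E) has_real_derivative (Tper J E + J * (Tper_slope \<alpha>J / \<eta>)) / 2) (at J)"
    unfolding Pt_def
    by (rule DERIV_cong[OF DERIV_cdivide[OF DERIV_mult[OF DERIV_ident TJ]]]) (simp add: algebra_simps)
  show ?thesis
    using PE PJ ME MJ Pt_Mt_determinant_neg[OF \<open>0 < J\<close>]
    unfolding \<alpha>E_def \<epsilon>_def \<alpha>J_def \<eta>_def by blast
qed

end
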